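(* Let $\phi\in\mathrm{Diff}(\mathbb C^2,0)$ be such that $\sigma\circ\phi\circ\sigma=\phi^{\circ(-1)}$ and $h\circ\phi=h$ with $h(\xi)=\xi_1\xi_2$, with $\phi(\xi)=\Lambda\xi+\mathrm{h.o.t.}$ where $\Lambda=\mathrm{diag}(\lambda,\lambda^{-1})$ or $\Lambda=-\sigma$, and such that $\phi^{\circ p}$ is tangent to the identity for some $p\geq1$ and $\phi^{\circ p}\neq\mathrm{id}$. Let $\mathcal I$ be the ideal of $\mathbb C\{\xi\}$ generated by $f=\frac{\xi_1\circ\phi^{\circ p}-\xi_1}{\xi_1}$ and $\hat{\mathcal I}$ the ideal of $\mathbb C[[\xi]]$ generated by $f$. Then $\mathcal I$ and $\hat{\mathcal I}$ are invariant by composition with $\sigma$ and with $\phi$, i.e. $\mathcal I\circ\sigma=\mathcal I$, $\mathcal I\circ\phi=\mathcal I$, and likewise for $\hat{\mathcal I}$.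
   Context: $\sigma(\xi)=(\xi_2,\xi_1)$. $\mathcal I\circ g=\{a\circ g: a\in\mathcal I\}$. *)

theory Defs
  imports "HOL-Analysis.Analysis"
begin

text \<open>Points of C^2 are pairs (xi1, xi2). Germs at 0 are represented by functions
  on C^2 and compared by equality eventually in nhds 0.\<close>

definition sigma :: "complex \<times> complex \<Rightarrow> complex \<times> complex" where
  "sigma \<xi> = (snd \<xi>, fst \<xi>)"

definition hprod :: "complex \<times> complex \<Rightarrow> complex" where
  "hprod \<xi> = fst \<xi> * snd \<xi>"

definition expands_at0 :: "(nat \<times> nat \<Rightarrow> complex) \<Rightarrow> (complex \<times> complex \<Rightarrow> complex) \<Rightarrow> bool" where
  "expands_at0 c g \<longleftrightarrow> (\<exists>r>0. \<forall>z1 z2. norm z1 < r \<longrightarrow> norm z2 < r \<longrightarrow>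
      ((\<lambda>(i,j). c (i,j) * z1 ^ i * z2 ^ j) has_sum g (z1, z2)) UNIV)"

definition conv0 :: "(complex \<times> complex \<Rightarrow> complex) \<Rightarrow> bool" where
  "conv0 g \<longleftrightarrow> (\<exists>c. expands_at0 c g)"

definition taylor :: "(complex \<times> complex \<Rightarrow> complex) \<Rightarrow> (nat \<times> nat \<Rightarrow> complex)" where
  "taylor g = (SOME c. expands_at0 c g)"

text \<open>Ideal of C{xi} generated by f (as a set of representatives, closed under germ equality).\<close>
definition conv_ideal :: "(complex \<times> complex \<Rightarrow> complex) \<Rightarrow> (complex \<times> complex \<Rightarrow> complex) set" where
  "conv_ideal f = {g. conv0 g \<and> (\<exists>u. conv0 u \<and> (\<forall>\<^sub>F \<xi> in nhds 0. g \<xi> = u \<xi> * f \<xi>))}"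

definition germ_set_eq :: "('a::{zero,topological_space} \<Rightarrow> 'b) set \<Rightarrow> ('a \<Rightarrow> 'b) set \<Rightarrow> bool" where
  "germ_set_eq A B \<longleftrightarrow>
     (\<forall>a\<in>A. \<exists>b\<in>B. \<forall>\<^sub>F \<xi> in nhds 0. a \<xi> = b \<xi>) \<and> (\<forall>b\<in>B. \<exists>a\<in>A. \<forall>\<^sub>F \<xi> in nhds 0. a \<xi> = b \<xi>)"

type_synonym fps2 = "nat \<times> nat \<Rightarrow> complex"

definition fone :: fps2 where
  "fone = (\<lambda>(i,j). if i = 0 \<and> j = 0 then 1 else 0)"

definition fmult :: "fps2 \<Rightarrow> fps2 \<Rightarrow> fps2" where
  "fmult a b = (\<lambda>(m,n). \<Sum>i\<le>m. \<Sum>j\<le>n. a (i,j) * b (m - i, n - j))"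

definition fpow :: "fps2 \<Rightarrow> nat \<Rightarrow> fps2" where
  "fpow a k = (fmult a ^^ k) fone"

text \<open>Formal composition a(P,Q), meaningful when P, Q have zero constant term
  (then only monomials of total degree \<le> m+n contribute to coefficient (m,n)).\<close>
definition fcomp :: "fps2 \<Rightarrow> fps2 \<Rightarrow> fps2 \<Rightarrow> fps2" where
  "fcomp a P Q = (\<lambda>(m,n). \<Sum>i\<le>m+n. \<Sum>j\<le>m+n-i. a (i,j) * fmult (fpow P i) (fpow Q j) (m,n))"

definition fswap :: "fps2 \<Rightarrow> fps2" where
  "fswap a = (\<lambda>(i,j). a (j,i))"

definition formal_ideal :: "fps2 \<Rightarrow> fps2 set" where
  "formal_ideal F = {fmult u F | u. True}"

end

theory Submission
  imports Defs
begin

text \<open>Let \<open>\<psi> = \<phi>\<^sup>p\<close>. Being tangent to the identity and preserving \<open>h = \<xi>\<^sub>1\<xi>\<^sub>2\<close>, \<open>\<psi>\<close> preserves both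
  axes, so \<open>\<psi>(\<xi>) = (\<xi>\<^sub>1(1 + f), \<xi>\<^sub>2(1 + g))\<close> with \<open>(1 + f)(1 + g) = 1\<close>. Hence \<open>g\<close> lies in the
  ideal \<open>(f)\<close>, and by Hadamard's lemma \<open>a \<circ> \<psi> - a \<in> (f)\<close> for every germ \<open>a\<close>. Reversibility
  \<open>\<psi> \<circ> \<sigma> \<circ> \<psi> = \<sigma>\<close> gives \<open>(f \<circ> \<sigma>) \<circ> \<psi> = f\<close>, whence \<open>f \<circ> \<sigma> \<in> (f)\<close>. The first component of \<open>\<phi>\<close>
  is a unit times \<open>\<xi>\<^sub>1\<close> (diagonal case) or \<open>\<xi>\<^sub>2\<close> (anti-diagonal case), and comparing first
  components of \<open>\<psi> \<circ> \<phi> = \<phi> \<circ> \<psi>\<close> gives \<open>f \<circ> \<phi> \<in> (f)\<close>. So composition with \<open>\<sigma>\<close> and with \<open>\<phi>\<close>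
  maps the ideal into itself, and \<open>\<phi>\<^sup>-\<^sup>1 = \<sigma> \<circ> \<phi> \<circ> \<sigma>\<close> gives equality; taking Taylor series
  transfers everything to formal power series.\<close>

lemma has_sum_diff:
  fixes f g :: "'a \<Rightarrow> 'b::topological_ab_group_add"
  assumes "(f has_sum a) A" "(g has_sum b) A"
  shows "((\<lambda>x. f x - g x) has_sum (a - b)) A"
proof -
  have "((\<lambda>x. - g x) has_sum (- b)) A" using assms(2) has_sum_uminus by fastforce
  from has_sum_add[OF assms(1) this] show ?thesis by simp
qed

lemma has_sum_rows_and_columns:
  fixes F :: "'a \<times> 'b \<Rightarrow> 'c::banach"
  assumes F: "F summable_on UNIV"
    and rows: "\<And>a. ((\<lambda>b. F (a, b)) has_sum r a) UNIV"
    and cols: "\<And>b. ((\<lambda>a. F (a, b)) has_sum c b) UNIV"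
  shows "(r has_sum infsum F UNIV) UNIV" and "(c has_sum infsum F UNIV) UNIV"
proof -
  have F': "(F has_sum infsum F UNIV) (UNIV \<times> UNIV)" using F by simp
  then show "(r has_sum infsum F UNIV) UNIV"
    by (rule has_sum_SigmaD) (use rows in auto)
  from F' have "((\<lambda>(b, a). F (a, b)) has_sum infsum F UNIV) (UNIV \<times> UNIV)"
    by (rule has_sum_swap[THEN iffD1])
  then show "(c has_sum infsum F UNIV) UNIV"
    by (rule has_sum_SigmaD) (use cols in auto)
qed

section \<open>Absolutely convergent double power series\<close>

definition polydisc :: "real \<Rightarrow> (complex \<times> complex) set" where
  "polydisc s = {z. norm (fst z) \<le> s \<and> norm (snd z) \<le> s}"

definition ps_term :: "fps2 \<Rightarrow> complex \<times> complex \<Rightarrow> nat \<times> nat \<Rightarrow> complex" where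
  "ps_term A z = (\<lambda>(m,n). A (m,n) * fst z ^ m * snd z ^ n)"

definition ps_major :: "fps2 \<Rightarrow> real \<Rightarrow> nat \<times> nat \<Rightarrow> real" where
  "ps_major A s = (\<lambda>(m,n). norm (A (m,n)) * s ^ (m+n))"

definition ps_summable :: "fps2 \<Rightarrow> real \<Rightarrow> bool" where
  "ps_summable A s \<longleftrightarrow> ps_major A s summable_on UNIV"

definition ps_norm :: "fps2 \<Rightarrow> real \<Rightarrow> real" where
  "ps_norm A s = infsum (ps_major A s) UNIV"

definition ps_eval :: "fps2 \<Rightarrow> complex \<times> complex \<Rightarrow> complex" where
  "ps_eval A z = infsum (ps_term A z) UNIV"

lemma polydisc_mono: "z \<in> polydisc t \<Longrightarrow> t \<le> s \<Longrightarrow> z \<in> polydisc s"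
  by (auto simp: polydisc_def)

lemma zero_in_polydisc: "s \<ge> 0 \<Longrightarrow> 0 \<in> polydisc s"
  by (simp add: polydisc_def zero_prod_def)

lemma swap_in_polydisc_iff: "(snd z, fst z) \<in> polydisc s \<longleftrightarrow> z \<in> polydisc s"
  by (auto simp: polydisc_def)

lemma ps_major_nonneg: "s \<ge> 0 \<Longrightarrow> ps_major A s x \<ge> 0"
  by (auto simp: ps_major_def split: prod.splits)

lemma ps_norm_nonneg: "s \<ge> 0 \<Longrightarrow> ps_norm A s \<ge> 0"
  unfolding ps_norm_def by (rule infsum_nonneg) (simp add: ps_major_nonneg)

lemma norm_ps_term_le: "z \<in> polydisc s \<Longrightarrow> norm (ps_term A z x) \<le> ps_major A s x"
proof -
  assume z: "z \<in> polydisc s"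
  obtain m n where x: "x = (m,n)" by force
  have s: "s \<ge> 0" using z by (auto simp: polydisc_def intro: order_trans[OF norm_ge_zero])
  have "norm (fst z ^ m) \<le> s ^ m" "norm (snd z ^ n) \<le> s ^ n"
    using z by (auto simp: polydisc_def norm_power intro: power_mono)
  then have "norm (fst z ^ m) * norm (snd z ^ n) \<le> s^m * s^n"
    using s by (intro mult_mono) auto
  then show ?thesis unfolding x ps_term_def ps_major_def
    by (simp add: norm_mult power_add mult.assoc mult_left_mono)
qed

lemma ps_term_abs_summable:
  "ps_summable A s \<Longrightarrow> z \<in> polydisc s \<Longrightarrow> (\<lambda>x. norm (ps_term A z x)) summable_on UNIV"
  unfolding ps_summable_def
  by (rule summable_on_comparison_test[where f="ps_major A s"]) (auto intro: norm_ps_term_le)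

lemma ps_eval_has_sum: "ps_summable A s \<Longrightarrow> z \<in> polydisc s \<Longrightarrow> (ps_term A z has_sum ps_eval A z) UNIV"
  unfolding ps_eval_def by (rule has_sum_infsum, rule abs_summable_summable, rule ps_term_abs_summable)

lemma ps_norm_has_sum: "ps_summable A s \<Longrightarrow> (ps_major A s has_sum ps_norm A s) UNIV"
  unfolding ps_norm_def ps_summable_def by (rule has_sum_infsum)

lemma ps_major_le_ps_norm: "ps_summable A s \<Longrightarrow> s \<ge> 0 \<Longrightarrow> ps_major A s x \<le> ps_norm A s"
  using infsum_mono_neutral[of "ps_major A s" "{x}" "ps_major A s" UNIV]
  by (simp add: ps_norm_def ps_summable_def ps_major_nonneg)

lemma norm_ps_eval_le: "ps_summable A s \<Longrightarrow> z \<in> polydisc s \<Longrightarrow> norm (ps_eval A z) \<le> ps_norm A s"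
  by (rule norm_infsum_le[OF ps_eval_has_sum ps_norm_has_sum]) (auto intro: norm_ps_term_le)

lemma ps_major_mono: "0 \<le> t \<Longrightarrow> t \<le> s \<Longrightarrow> ps_major A t x \<le> ps_major A s x"
  by (auto simp: ps_major_def split: prod.splits intro!: mult_left_mono power_mono)

lemma ps_summable_mono: "ps_summable A s \<Longrightarrow> 0 \<le> t \<Longrightarrow> t \<le> s \<Longrightarrow> ps_summable A t"
  unfolding ps_summable_def
  by (rule summable_on_comparison_test[where f="ps_major A s"]) (auto intro: ps_major_mono ps_major_nonneg)

lemma ps_family_major_summable:
  assumes s: "s \<ge> 0" and R: "\<And>k. ps_summable (R k) s"
    and norms: "(\<lambda>k. ps_norm (R k) s) summable_on UNIV"
  shows "(\<lambda>(k, mn). ps_major (R k) s mn) summable_on UNIV"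
proof -
  have "((\<lambda>mn. ps_major (R k) s mn) has_sum ps_norm (R k) s) UNIV" for k
    by (rule ps_norm_has_sum[OF R])
  then have "(\<lambda>(k, mn). ps_major (R k) s mn) summable_on UNIV \<times> UNIV"
    by (intro summable_on_SigmaI[OF _ norms]) (auto simp: s ps_major_nonneg)
  then show ?thesis by simp
qed

lemma ps_family_coeffs_summable:
  assumes s: "s > 0" and R: "\<And>k. ps_summable (R k) s"
    and norms: "(\<lambda>k. ps_norm (R k) s) summable_on UNIV"
  shows "(\<lambda>k. norm (R k mn)) summable_on UNIV"
proof -
  obtain m n where mn: "mn = (m,n)" by force
  have "norm (R k mn) \<le> ps_norm (R k) s * inverse (s ^ (m+n))" for k
    using ps_major_le_ps_norm[OF R, of k mn] s by (simp add: ps_major_def mn field_simps)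
  then show ?thesis
    by (intro summable_on_comparison_test[OF summable_on_cmult_left[OF norms]]) auto
qed

lemma ps_family_sum:
  fixes R :: "'k \<Rightarrow> fps2"
  assumes s: "s > 0" and R: "\<And>k. ps_summable (R k) s"
    and norms: "(\<lambda>k. ps_norm (R k) s) summable_on UNIV"
  defines "S \<equiv> \<lambda>mn. \<Sum>\<^sub>\<infinity>k. R k mn"
  shows "ps_summable S s" and "ps_norm S s \<le> (\<Sum>\<^sub>\<infinity>k. ps_norm (R k) s)"
proof -
  define T where "T = (\<lambda>(k, mn). ps_major (R k) s mn)"
  have T: "T summable_on UNIV" unfolding T_def by (rule ps_family_major_summable[OF _ R norms]) (use s in simp)
  have T_rows: "((\<lambda>mn. T (k, mn)) has_sum ps_norm (R k) s) UNIV" for k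
    using ps_norm_has_sum[OF R] by (simp add: T_def)
  note coeffs = ps_family_coeffs_summable[OF s R norms]
  define C where "C = (\<lambda>mn. (\<Sum>\<^sub>\<infinity>k. norm (R k mn)) * s ^ (fst mn + snd mn))"
  have T_cols: "((\<lambda>k. T (k, mn)) has_sum C mn) UNIV" for mn
    using has_sum_cmult_left[OF has_sum_infsum[OF coeffs[of mn]], where c="s ^ (fst mn + snd mn)"]
    by (simp add: C_def T_def ps_major_def case_prod_unfold)
  have C: "(C has_sum (\<Sum>\<^sub>\<infinity>k. ps_norm (R k) s)) UNIV"
    using has_sum_rows_and_columns[OF T T_rows T_cols] by (simp add: infsumI)
  have S_le_C: "ps_major S s mn \<le> C mn" for mn
  proof -
    have "norm (S mn) \<le> (\<Sum>\<^sub>\<infinity>k. norm (R k mn))"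
      unfolding S_def by (rule norm_infsum_le[OF has_sum_infsum has_sum_infsum])
        (auto intro: abs_summable_summable coeffs)
    then show ?thesis using s by (simp add: C_def ps_major_def case_prod_unfold mult_right_mono)
  qed
  show S: "ps_summable S s"
    unfolding ps_summable_def
    by (rule summable_on_comparison_test[OF has_sum_imp_summable[OF C]]) (use S_le_C s ps_major_nonneg in auto)
  have "ps_norm S s \<le> infsum C UNIV"
    unfolding ps_norm_def by (rule infsum_mono[OF S[unfolded ps_summable_def] has_sum_imp_summable[OF C] S_le_C])
  then show "ps_norm S s \<le> (\<Sum>\<^sub>\<infinity>k. ps_norm (R k) s)"
    using infsumI[OF C] by simp
qed

lemma ps_family_sum_eval:
  fixes R :: "'k \<Rightarrow> fps2"
  assumes s: "s > 0" and R: "\<And>k. ps_summable (R k) s"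
    and norms: "(\<lambda>k. ps_norm (R k) s) summable_on UNIV" and z: "z \<in> polydisc s"
  shows "((\<lambda>k. ps_eval (R k) z) has_sum ps_eval (\<lambda>mn. \<Sum>\<^sub>\<infinity>k. R k mn) z) UNIV"
proof -
  define F where "F = (\<lambda>(k, mn). ps_term (R k) z mn)"
  have F: "F summable_on UNIV"
    by (rule abs_summable_summable, rule summable_on_comparison_test[OF ps_family_major_summable[OF _ R norms]])
       (use s z norm_ps_term_le in \<open>auto simp: F_def split: prod.splits\<close>)
  have F_rows: "((\<lambda>mn. F (k, mn)) has_sum ps_eval (R k) z) UNIV" for k
    using ps_eval_has_sum[OF R z] by (simp add: F_def)
  have F_cols: "((\<lambda>k. F (k, mn)) has_sum ps_term (\<lambda>mn. \<Sum>\<^sub>\<infinity>k. R k mn) z mn) UNIV" for mn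
    using has_sum_cmult_left[OF has_sum_infsum[OF abs_summable_summable[OF ps_family_coeffs_summable[OF s R norms]]],
        where c="fst z ^ fst mn * snd z ^ snd mn"]
    by (simp add: F_def ps_term_def case_prod_unfold mult.assoc)
  note fubini = has_sum_rows_and_columns[OF F F_rows F_cols]
  have "ps_eval (\<lambda>mn. \<Sum>\<^sub>\<infinity>k. R k mn) z = infsum F UNIV"
    unfolding ps_eval_def by (rule infsumI[OF fubini(2)])
  with fubini(1) show ?thesis by simp
qed
definition fps2_shift :: "nat \<Rightarrow> nat \<Rightarrow> (nat \<times> nat \<Rightarrow> 'a::zero) \<Rightarrow> nat \<times> nat \<Rightarrow> 'a" where
  "fps2_shift i j A = (\<lambda>(m,n). if i \<le> m \<and> j \<le> n then A (m-i, n-j) else 0)"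

lemma has_sum_fps2_shift_iff:
  fixes f :: "nat \<times> nat \<Rightarrow> 'a::{comm_monoid_add, topological_space}"
  shows "(fps2_shift i j f has_sum x) UNIV \<longleftrightarrow> (f has_sum x) UNIV"
proof -
  define h where "h = (\<lambda>(m::nat,n::nat). (m+i, n+j))"
  have inj: "inj_on h UNIV" by (auto simp: h_def inj_on_def)
  have e: "fps2_shift i j f \<circ> h = f" by (auto simp: fps2_shift_def h_def o_def)
  have hU: "h ` UNIV = {(m,n). i \<le> m \<and> j \<le> n}"
    by (auto simp: h_def image_def) (metis le_add_diff_inverse2)+
  have "(fps2_shift i j f has_sum x) UNIV \<longleftrightarrow> (fps2_shift i j f has_sum x) (h ` UNIV)"
    by (rule has_sum_cong_neutral) (auto simp: fps2_shift_def hU split: if_splits)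
  also have "\<dots> \<longleftrightarrow> (f has_sum x) UNIV" using has_sum_reindex[OF inj, of "fps2_shift i j f" x] e by simp
  finally show ?thesis .
qed

lemma ps_major_shift: "ps_major (fps2_shift i j A) s = (\<lambda>mn. s ^ (i+j) * fps2_shift i j (ps_major A s) mn)"
proof
  fix mn :: "nat \<times> nat"
  obtain m n where mn: "mn = (m,n)" by force
  show "ps_major (fps2_shift i j A) s mn = s ^ (i+j) * fps2_shift i j (ps_major A s) mn"
  proof (cases "i \<le> m \<and> j \<le> n")
    case True
    then have "s ^ (m+n) = s^(i+j) * s^((m-i)+(n-j))" by (simp flip: power_add)
    then show ?thesis using True by (simp add: ps_major_def fps2_shift_def mn mult_ac add.commute[of j i])
  qed (auto simp: ps_major_def fps2_shift_def mn)
qed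

lemma ps_term_shift:
  "ps_term (fps2_shift i j A) z = (\<lambda>mn. fst z ^ i * snd z ^ j * fps2_shift i j (ps_term A z) mn)"
proof
  fix mn :: "nat \<times> nat"
  obtain m n where mn: "mn = (m,n)" by force
  show "ps_term (fps2_shift i j A) z mn = fst z ^ i * snd z ^ j * fps2_shift i j (ps_term A z) mn"
  proof (cases "i \<le> m \<and> j \<le> n")
    case True
    then have "fst z ^ m = fst z ^ i * fst z ^ (m-i)" "snd z ^ n = snd z ^ j * snd z ^ (n-j)"
      by (simp_all flip: power_add)
    then show ?thesis using True by (simp add: ps_term_def fps2_shift_def mn mult_ac)
  qed (auto simp: ps_term_def fps2_shift_def mn)
qed

lemma ps_shift:
  assumes A: "ps_summable A s"
  shows "ps_summable (fps2_shift i j A) s" and "ps_norm (fps2_shift i j A) s = s ^ (i+j) * ps_norm A s"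
    and "z \<in> polydisc s \<Longrightarrow> ps_eval (fps2_shift i j A) z = fst z ^ i * snd z ^ j * ps_eval A z"
proof -
  have "(ps_major (fps2_shift i j A) s has_sum (s^(i+j) * ps_norm A s)) UNIV"
    unfolding ps_major_shift
    by (rule has_sum_cmult_right) (simp add: has_sum_fps2_shift_iff ps_norm_has_sum[OF A])
  then show "ps_summable (fps2_shift i j A) s" "ps_norm (fps2_shift i j A) s = s ^ (i+j) * ps_norm A s"
    by (auto simp: ps_summable_def has_sum_imp_summable ps_norm_def infsumI)
  assume z: "z \<in> polydisc s"
  have "(ps_term (fps2_shift i j A) z has_sum (fst z ^ i * snd z ^ j * ps_eval A z)) UNIV"
    unfolding ps_term_shift
    by (rule has_sum_cmult_right) (simp add: has_sum_fps2_shift_iff ps_eval_has_sum[OF A z])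
  then show "ps_eval (fps2_shift i j A) z = fst z ^ i * snd z ^ j * ps_eval A z"
    by (simp add: ps_eval_def infsumI)
qed

lemma fmult_as_infsum: "fmult A B mn = (\<Sum>\<^sub>\<infinity>k. A k * fps2_shift (fst k) (snd k) B mn)"
proof -
  obtain m n where mn: "mn = (m,n)" by force
  have "(\<Sum>\<^sub>\<infinity>k. A k * fps2_shift (fst k) (snd k) B mn)
      = (\<Sum>k\<in>{..m} \<times> {..n}. A k * fps2_shift (fst k) (snd k) B mn)"
    by (subst infsum_cong_neutral[where T="{..m} \<times> {..n}" and g="\<lambda>k. A k * fps2_shift (fst k) (snd k) B mn"])
       (auto simp: fps2_shift_def mn)
  also have "\<dots> = (\<Sum>i\<le>m. \<Sum>j\<le>n. A (i,j) * B (m - i, n - j))"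
    by (auto simp: sum.cartesian_product fps2_shift_def mn case_prod_unfold intro!: sum.cong)
  finally show ?thesis by (simp add: fmult_def mn)
qed

lemma ps_scale:
  assumes A: "ps_summable A s"
  shows "ps_summable (\<lambda>mn. c * A mn) s" and "ps_norm (\<lambda>mn. c * A mn) s = norm c * ps_norm A s"
    and "ps_eval (\<lambda>mn. c * A mn) z = c * ps_eval A z"
proof -
  have e: "ps_major (\<lambda>mn. c * A mn) s = (\<lambda>x. norm c * ps_major A s x)"
    by (auto simp: ps_major_def norm_mult)
  show "ps_summable (\<lambda>mn. c * A mn) s" using A unfolding ps_summable_def e by (rule summable_on_cmult_right)
  show "ps_norm (\<lambda>mn. c * A mn) s = norm c * ps_norm A s" unfolding ps_norm_def e by (rule infsum_cmult_right')
  have "ps_term (\<lambda>mn. c * A mn) z = (\<lambda>x. c * ps_term A z x)" by (auto simp: ps_term_def)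
  then show "ps_eval (\<lambda>mn. c * A mn) z = c * ps_eval A z" unfolding ps_eval_def by (simp add: infsum_cmult_right')
qed

lemma ps_add:
  assumes s: "s \<ge> 0" and A: "ps_summable A s" and B: "ps_summable B s"
  shows "ps_summable (\<lambda>mn. A mn + B mn) s" and "ps_norm (\<lambda>mn. A mn + B mn) s \<le> ps_norm A s + ps_norm B s"
    and "z \<in> polydisc s \<Longrightarrow> ps_eval (\<lambda>mn. A mn + B mn) z = ps_eval A z + ps_eval B z"
proof -
  have le: "ps_major (\<lambda>mn. A mn + B mn) s x \<le> ps_major A s x + ps_major B s x" for x
    using s by (auto simp: ps_major_def split: prod.splits simp flip: distrib_right
        intro!: mult_right_mono norm_triangle_ineq)
  have sAB: "(\<lambda>x. ps_major A s x + ps_major B s x) summable_on UNIV"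
    using A B by (auto simp: ps_summable_def intro: summable_on_add)
  show AB: "ps_summable (\<lambda>mn. A mn + B mn) s"
    unfolding ps_summable_def
    by (rule summable_on_comparison_test[OF sAB]) (use le s ps_major_nonneg in auto)
  show "ps_norm (\<lambda>mn. A mn + B mn) s \<le> ps_norm A s + ps_norm B s"
    unfolding ps_norm_def using A B AB le
    by (subst infsum_add[symmetric]) (auto simp: ps_summable_def intro!: infsum_mono summable_on_add)
  assume z: "z \<in> polydisc s"
  have "ps_term (\<lambda>mn. A mn + B mn) z = (\<lambda>x. ps_term A z x + ps_term B z x)"
    by (auto simp: ps_term_def distrib_right)
  then show "ps_eval (\<lambda>mn. A mn + B mn) z = ps_eval A z + ps_eval B z"
    using has_sum_add[OF ps_eval_has_sum[OF A z] ps_eval_has_sum[OF B z]] by (simp add: ps_eval_def infsumI)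
qed

lemma ps_diff:
  assumes s: "s \<ge> 0" and A: "ps_summable A s" and B: "ps_summable B s"
  shows "ps_summable (\<lambda>mn. A mn - B mn) s"
    and "z \<in> polydisc s \<Longrightarrow> ps_eval (\<lambda>mn. A mn - B mn) z = ps_eval A z - ps_eval B z"
proof -
  have e: "(\<lambda>mn. A mn - B mn) = (\<lambda>mn. A mn + (\<lambda>mn. (-1) * B mn) mn)" by auto
  note B' = ps_scale[OF B, where c="-1"]
  show "ps_summable (\<lambda>mn. A mn - B mn) s" unfolding e by (rule ps_add(1)[OF s A B'(1)])
  assume "z \<in> polydisc s"
  then show "ps_eval (\<lambda>mn. A mn - B mn) z = ps_eval A z - ps_eval B z"
    unfolding e using ps_add(3)[OF s A B'(1)] B'(3) by simp
qed

lemma ps_fmult: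
  assumes s: "s > 0" and A: "ps_summable A s" and B: "ps_summable B s"
  shows "ps_summable (fmult A B) s" and "ps_norm (fmult A B) s \<le> ps_norm A s * ps_norm B s"
    and "z \<in> polydisc s \<Longrightarrow> ps_eval (fmult A B) z = ps_eval A z * ps_eval B z"
proof -
  define R where "R = (\<lambda>k mn. A k * fps2_shift (fst k) (snd k) B mn)"
  have R: "ps_summable (R k) s" for k
    unfolding R_def by (rule ps_scale(1)[OF ps_shift(1)[OF B]])
  have R_norm: "ps_norm (R k) s = ps_major A s k * ps_norm B s" for k
    unfolding R_def ps_scale(2)[OF ps_shift(1)[OF B]] ps_shift(2)[OF B]
    by (simp add: ps_major_def case_prod_unfold)
  have norms: "((\<lambda>k. ps_norm (R k) s) has_sum (ps_norm A s * ps_norm B s)) UNIV"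
    unfolding R_norm by (rule has_sum_cmult_left, rule ps_norm_has_sum[OF A])
  have fmult: "(\<lambda>mn. \<Sum>\<^sub>\<infinity>k. R k mn) = fmult A B"
    by (rule ext) (simp add: fmult_as_infsum R_def)
  note family = ps_family_sum[OF s R has_sum_imp_summable[OF norms], unfolded fmult]
  show "ps_summable (fmult A B) s" by (rule family(1))
  show "ps_norm (fmult A B) s \<le> ps_norm A s * ps_norm B s" using family(2) infsumI[OF norms] by simp
  assume z: "z \<in> polydisc s"
  have "ps_eval (R k) z = ps_term A z k * ps_eval B z" for k
    unfolding R_def ps_scale(3)[OF ps_shift(1)[OF B]] ps_shift(3)[OF B z]
    by (simp add: ps_term_def case_prod_unfold mult.assoc)
  then have "((\<lambda>k. ps_eval (R k) z) has_sum (ps_eval A z * ps_eval B z)) UNIV"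
    using has_sum_cmult_left[OF ps_eval_has_sum[OF A z]] by simp
  then show "ps_eval (fmult A B) z = ps_eval A z * ps_eval B z"
    using ps_family_sum_eval[OF s R has_sum_imp_summable[OF norms] z, unfolded fmult] has_sum_unique by blast
qed

lemma ps_finite_support:
  assumes fin: "finite B" and out: "\<And>mn. mn \<notin> B \<Longrightarrow> A mn = 0"
  shows "ps_summable A s" and "ps_norm A s = sum (ps_major A s) B"
    and "ps_eval A z = sum (ps_term A z) B"
proof -
  have major: "(ps_major A s has_sum sum (ps_major A s) B) UNIV"
    by (rule has_sum_finite_neutralI[OF fin]) (auto simp: ps_major_def out split: prod.splits)
  then show "ps_summable A s" by (auto simp: ps_summable_def has_sum_imp_summable)
  show "ps_norm A s = sum (ps_major A s) B" using major by (simp add: ps_norm_def infsumI)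
  have "(ps_term A z has_sum sum (ps_term A z) B) UNIV"
    by (rule has_sum_finite_neutralI[OF fin]) (auto simp: ps_term_def out split: prod.splits)
  then show "ps_eval A z = sum (ps_term A z) B" by (simp add: ps_eval_def infsumI)
qed

lemma ps_eval_zero: "ps_eval A 0 = A (0,0)"
proof -
  have "ps_eval (\<lambda>mn. if mn = (0,0) then A mn else 0) 0 = A (0,0)"
    using ps_finite_support(3)[of "{(0,0)}"] by (simp add: ps_term_def zero_prod_def)
  moreover have "ps_term A 0 = ps_term (\<lambda>mn. if mn = (0,0) then A mn else 0) 0"
    by (auto simp: ps_term_def zero_prod_def zero_power)
  ultimately show ?thesis by (simp add: ps_eval_def)
qed

definition fps2_monom :: "complex \<Rightarrow> nat \<Rightarrow> nat \<Rightarrow> fps2" where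
  "fps2_monom c i j = (\<lambda>mn. if mn = (i,j) then c else 0)"

lemma ps_monom:
  shows "ps_summable (fps2_monom c i j) s" and "ps_norm (fps2_monom c i j) s = norm c * s ^ (i+j)"
    and "ps_eval (fps2_monom c i j) z = c * fst z ^ i * snd z ^ j"
proof -
  have supp: "finite {(i,j)}" "\<And>mn. mn \<notin> {(i,j)} \<Longrightarrow> fps2_monom c i j mn = 0"
    by (auto simp: fps2_monom_def)
  show "ps_summable (fps2_monom c i j) s" by (rule ps_finite_support(1)[OF supp])
  show "ps_norm (fps2_monom c i j) s = norm c * s ^ (i+j)"
    using ps_finite_support(2)[OF supp] by (simp add: ps_major_def fps2_monom_def)
  show "ps_eval (fps2_monom c i j) z = c * fst z ^ i * snd z ^ j"
    using ps_finite_support(3)[OF supp] by (simp add: ps_term_def fps2_monom_def)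
qed

lemma fone_eq_monom: "fone = fps2_monom 1 0 0"
  by (auto simp: fone_def fps2_monom_def)

lemma ps_sum_finite:
  assumes s: "s \<ge> 0" and fin: "finite I" and A: "\<And>i. i \<in> I \<Longrightarrow> ps_summable (A i) s"
  shows "ps_summable (\<lambda>mn. \<Sum>i\<in>I. A i mn) s \<and> ps_norm (\<lambda>mn. \<Sum>i\<in>I. A i mn) s \<le> (\<Sum>i\<in>I. ps_norm (A i) s) \<and>
    (\<forall>z\<in>polydisc s. ps_eval (\<lambda>mn. \<Sum>i\<in>I. A i mn) z = (\<Sum>i\<in>I. ps_eval (A i) z))"
  using fin A
proof (induction I rule: finite_induct)
  case empty
  have "(\<lambda>mn. \<Sum>i\<in>{}. A i mn) = fps2_monom 0 0 0" by (auto simp: fps2_monom_def)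
  then show ?case by (simp add: ps_monom)
next
  case (insert x F)
  have Ax: "ps_summable (A x) s" using insert by auto
  have IH: "ps_summable (\<lambda>mn. \<Sum>i\<in>F. A i mn) s" "ps_norm (\<lambda>mn. \<Sum>i\<in>F. A i mn) s \<le> (\<Sum>i\<in>F. ps_norm (A i) s)"
    "\<And>z. z \<in> polydisc s \<Longrightarrow> ps_eval (\<lambda>mn. \<Sum>i\<in>F. A i mn) z = (\<Sum>i\<in>F. ps_eval (A i) z)"
    using insert by auto
  show ?case unfolding sum.insert[OF insert.hyps]
  proof (intro conjI ballI)
    show "ps_summable (\<lambda>mn. A x mn + (\<Sum>i\<in>F. A i mn)) s" by (rule ps_add(1)[OF s Ax IH(1)])
    show "ps_norm (\<lambda>mn. A x mn + (\<Sum>i\<in>F. A i mn)) s \<le> ps_norm (A x) s + (\<Sum>i\<in>F. ps_norm (A i) s)"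
      using ps_add(2)[OF s Ax IH(1)] IH(2) by linarith
    fix z assume "z \<in> polydisc s"
    then show "ps_eval (\<lambda>mn. A x mn + (\<Sum>i\<in>F. A i mn)) z = ps_eval (A x) z + (\<Sum>i\<in>F. ps_eval (A i) z)"
      using ps_add(3)[OF s Ax IH(1)] IH(3) by simp
  qed
qed

lemma fmult_eq_0_below_order:
  assumes "\<And>m n. m + n < a \<Longrightarrow> A (m,n) = 0" "\<And>m n. m + n < b \<Longrightarrow> B (m,n) = 0" "m + n < a + b"
  shows "fmult A B (m,n) = 0"
  unfolding fmult_def prod.case
proof (intro sum.neutral ballI)
  fix i j assume ij: "i \<in> {..m}" "j \<in> {..n}"
  show "A (i, j) * B (m - i, n - j) = 0"
  proof (cases "i + j < a")
    case True then show ?thesis using assms(1) by simp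
  next
    case False
    then have "(m - i) + (n - j) < b" using ij assms(3) by auto
    then show ?thesis using assms(2) by simp
  qed
qed

lemma fpow_0 [simp]: "fpow A 0 = fone" by (simp add: fpow_def)

lemma fpow_Suc: "fpow A (Suc k) = fmult A (fpow A k)" by (simp add: fpow_def)

lemma fpow_eq_0_below_order:
  assumes "A (0,0) = 0" shows "m + n < k \<Longrightarrow> fpow A k (m,n) = 0"
proof (induction k arbitrary: m n)
  case 0 then show ?case by simp
next
  case (Suc k)
  show ?case unfolding fpow_Suc
    by (rule fmult_eq_0_below_order[where a=1 and b=k]) (use assms Suc in auto)
qed

lemma ps_fpow:
  assumes s: "s > 0" and A: "ps_summable A s"
  shows "ps_summable (fpow A k) s" and "ps_norm (fpow A k) s \<le> ps_norm A s ^ k"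
    and "z \<in> polydisc s \<Longrightarrow> ps_eval (fpow A k) z = ps_eval A z ^ k"
proof -
  have "ps_summable (fpow A k) s \<and> ps_norm (fpow A k) s \<le> ps_norm A s ^ k \<and>
      (\<forall>z\<in>polydisc s. ps_eval (fpow A k) z = ps_eval A z ^ k)"
  proof (induction k)
    case 0 then show ?case by (simp add: fone_eq_monom ps_monom)
  next
    case (Suc k)
    then have P: "ps_summable (fpow A k) s" "ps_norm (fpow A k) s \<le> ps_norm A s ^ k" by auto
    have "ps_norm A s * ps_norm (fpow A k) s \<le> ps_norm A s * ps_norm A s ^ k"
      using P(2) ps_norm_nonneg[of s A] s by (intro mult_left_mono) auto
    then show ?case unfolding fpow_Suc using ps_fmult[OF s A P(1)] Suc by auto
  qed
  then show "ps_summable (fpow A k) s" "ps_norm (fpow A k) s \<le> ps_norm A s ^ k"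
    "z \<in> polydisc s \<Longrightarrow> ps_eval (fpow A k) z = ps_eval A z ^ k" by auto
qed

lemma ps_norm_fmult_le:
  assumes "s > 0" "ps_summable A s" "ps_summable B s" "ps_norm A s \<le> a" "ps_norm B s \<le> b"
  shows "ps_norm (fmult A B) s \<le> a * b"
  using ps_fmult(2)[OF assms(1-3)] mult_mono[OF assms(4,5)] ps_norm_nonneg[of s] assms(1,4)
  by (meson less_imp_le order_trans)

lemma ps_norm_fpow_le:
  assumes "s > 0" "ps_summable A s" "ps_norm A s \<le> a"
  shows "ps_norm (fpow A k) s \<le> a ^ k"
  using ps_fpow(2)[OF assms(1,2)] power_mono[OF assms(3) ps_norm_nonneg] assms(1) by (auto intro: order_trans)

lemma ps_norm_vanishing_le:
  assumes A: "ps_summable A s" and s: "s > 0" and t: "0 \<le> t" "t \<le> s" and A0: "A (0,0) = 0"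
  shows "ps_norm A t \<le> t / s * ps_norm A s"
proof -
  have le: "ps_major A t x \<le> t / s * ps_major A s x" for x
  proof -
    obtain m n where x: "x = (m,n)" by force
    show ?thesis
    proof (cases "m + n = 0")
      case True then show ?thesis using A0 x by (simp add: ps_major_def)
    next
      case False
      then obtain k where k: "m + n = Suc k" using not0_implies_Suc by blast
      have "t ^ k \<le> s ^ k" using t by (intro power_mono) auto
      then have "t * t^k \<le> t * s ^ k" using t by (intro mult_left_mono) auto
      also have "\<dots> = t / s * (s * s^k)" using s by simp
      finally have "t ^ (m+n) \<le> t / s * s ^ (m+n)" unfolding k by simp
      then have "norm (A (m,n)) * t ^ (m+n) \<le> norm (A (m,n)) * (t / s * s ^ (m+n))"
        by (intro mult_left_mono) auto
      then show ?thesis unfolding x ps_major_def by (simp add: mult_ac)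
    qed
  qed
  have "(\<lambda>x. t / s * ps_major A s x) summable_on UNIV"
    by (rule summable_on_cmult_right) (use A in \<open>simp add: ps_summable_def\<close>)
  then have "ps_norm A t \<le> (\<Sum>\<^sub>\<infinity>x. t / s * ps_major A s x)"
    unfolding ps_norm_def using ps_summable_mono[OF A t] le
    by (intro infsum_mono) (auto simp: ps_summable_def)
  also have "\<dots> = t / s * ps_norm A s" unfolding ps_norm_def by (rule infsum_cmult_right')
  finally show ?thesis .
qed

lemma eventually_at_right_0_le: "s > 0 \<Longrightarrow> \<forall>\<^sub>F t in at_right (0::real). t \<le> s"
  unfolding eventually_at_right_field by (intro exI[of _ s]) auto

lemma eventually_at_right_0_witness:
  assumes "\<forall>\<^sub>F t in at_right (0::real). P t"
  obtains t where "t > 0" "P t"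
  using eventually_happens'[OF trivial_limit_at_right_real eventually_conj[OF eventually_at_right_less assms]]
  by blast

lemma ps_norm_eventually_le:
  assumes A: "ps_summable A s" and s: "s > 0" and A0: "A (0,0) = 0" and e: "e > 0"
  shows "\<forall>\<^sub>F t in at_right 0. ps_summable A t \<and> ps_norm A t \<le> e"
proof -
  have "((\<lambda>t. t / s * ps_norm A s) \<longlongrightarrow> 0 / s * ps_norm A s) (at_right 0)"
    using s by (intro tendsto_intros) auto
  then have "\<forall>\<^sub>F t in at_right 0. t / s * ps_norm A s < e"
    using e by (simp add: order_tendstoD(2))
  then show ?thesis
    using eventually_at_right_0_le[OF s] eventually_at_right_less
  proof eventually_elim
    case (elim t)
    then show ?case
      using ps_summable_mono[OF A] ps_norm_vanishing_le[OF A s _ _ A0, of t] by auto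
  qed
qed

lemma norm_ps_eval_sub_const_le:
  assumes A: "ps_summable A s" and s: "s > 0" and t: "0 \<le> t" "t \<le> s" and z: "z \<in> polydisc t"
  shows "norm (ps_eval A z - A (0,0)) \<le> t / s * ps_norm A s"
proof -
  define A' where "A' = (\<lambda>mn. A mn - fps2_monom (A (0,0)) 0 0 mn)"
  have A': "ps_summable A' s" unfolding A'_def by (rule ps_diff(1)[OF _ A ps_monom(1)]) (use s in auto)
  have e1: "ps_eval A' z = ps_eval A z - A (0,0)" unfolding A'_def
    using ps_diff(2)[OF _ A ps_monom(1) polydisc_mono[OF z t(2)]] s ps_monom(3) by auto
  moreover have "norm (ps_eval A' z) \<le> ps_norm A' t" by (rule norm_ps_eval_le[OF ps_summable_mono[OF A' t] z])
  moreover have "ps_norm A' t \<le> t / s * ps_norm A' s"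
    by (rule ps_norm_vanishing_le[OF A' s t]) (simp add: A'_def fps2_monom_def)
  moreover have "ps_norm A' s \<le> ps_norm A s"
    unfolding ps_norm_def using A' A
    by (intro infsum_mono) (auto simp: ps_summable_def ps_major_def A'_def fps2_monom_def split: prod.splits)
  then have "t / s * ps_norm A' s \<le> t / s * ps_norm A s"
    using t s by (intro mult_left_mono) auto
  ultimately show ?thesis unfolding e1[symmetric] by linarith
qed

lemma fcomp_as_infsum:
  assumes P0: "P (0,0) = 0" and Q0: "Q (0,0) = 0"
  shows "fcomp c P Q mn = (\<Sum>\<^sub>\<infinity>k. c k * fmult (fpow P (fst k)) (fpow Q (snd k)) mn)"
proof -
  obtain m n where mn: "mn = (m,n)" by force
  define N where "N = m + n"
  define B where "B = Sigma {..N} (\<lambda>i. {..N-i})"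
  have z: "c k * fmult (fpow P (fst k)) (fpow Q (snd k)) mn = 0" if "k \<notin> B" for k
  proof -
    obtain i j where k: "k = (i,j)" by force
    have "m + n < i + j" using that by (auto simp: B_def k N_def)
    then have "fmult (fpow P i) (fpow Q j) (m,n) = 0"
      by (intro fmult_eq_0_below_order[where a=i and b=j])
         (auto intro: fpow_eq_0_below_order[where A=P, OF P0] fpow_eq_0_below_order[where A=Q, OF Q0])
    then show ?thesis by (simp add: k mn)
  qed
  have "(\<Sum>\<^sub>\<infinity>k. c k * fmult (fpow P (fst k)) (fpow Q (snd k)) mn) =
        (\<Sum>k\<in>B. c k * fmult (fpow P (fst k)) (fpow Q (snd k)) mn)"
    by (subst infsum_cong_neutral[where T=B and g="\<lambda>k. c k * fmult (fpow P (fst k)) (fpow Q (snd k)) mn"])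
       (use z in \<open>auto simp: B_def\<close>)
  also have "\<dots> = (\<Sum>i\<le>N. \<Sum>j\<le>N-i. c (i,j) * fmult (fpow P i) (fpow Q j) mn)"
    unfolding B_def by (subst sum.Sigma) (auto simp: case_prod_unfold)
  also have "\<dots> = fcomp c P Q mn"
    by (simp add: fcomp_def mn N_def)
  finally show ?thesis by simp
qed

lemma ps_eval_pair_in_polydisc:
  assumes "ps_summable P s" "ps_summable Q s" "ps_norm P s \<le> r" "ps_norm Q s \<le> r" "z \<in> polydisc s"
  shows "(ps_eval P z, ps_eval Q z) \<in> polydisc r"
  using norm_ps_eval_le[OF assms(1,5)] norm_ps_eval_le[OF assms(2,5)] assms(3,4)
  by (auto simp: polydisc_def)

lemma ps_fcomp:
  assumes s: "s > 0" and c: "ps_summable c r" and P: "ps_summable P s" and Q: "ps_summable Q s"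
    and P_le: "ps_norm P s \<le> r" and Q_le: "ps_norm Q s \<le> r" and P0: "P (0,0) = 0" and Q0: "Q (0,0) = 0"
  shows "ps_summable (fcomp c P Q) s"
    and "z \<in> polydisc s \<Longrightarrow> ps_eval (fcomp c P Q) z = ps_eval c (ps_eval P z, ps_eval Q z)"
proof -
  define R where "R = (\<lambda>k mn. c k * fmult (fpow P (fst k)) (fpow Q (snd k)) mn)"
  have PQ: "ps_summable (fmult (fpow P i) (fpow Q j)) s" for i j
    by (rule ps_fmult(1)[OF s ps_fpow(1)[OF s P] ps_fpow(1)[OF s Q]])
  have R: "ps_summable (R k) s" for k
    unfolding R_def by (rule ps_scale(1)[OF PQ])
  have R_norm: "ps_norm (R k) s \<le> ps_major c r k" for k
  proof -
    obtain i j where k: "k = (i,j)" by force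
    have "ps_norm (fmult (fpow P i) (fpow Q j)) s \<le> r ^ i * r ^ j"
      by (rule ps_norm_fmult_le[OF s ps_fpow(1)[OF s P] ps_fpow(1)[OF s Q]
            ps_norm_fpow_le[OF s P P_le] ps_norm_fpow_le[OF s Q Q_le]])
    then have "norm (c k) * ps_norm (fmult (fpow P i) (fpow Q j)) s \<le> norm (c k) * (r ^ i * r ^ j)"
      by (rule mult_left_mono) simp
    then show ?thesis
      unfolding R_def k ps_scale(2)[OF PQ] by (simp add: ps_major_def power_add)
  qed
  have norms: "(\<lambda>k. ps_norm (R k) s) summable_on UNIV"
    by (rule summable_on_comparison_test[where f="ps_major c r"])
       (use c R_norm ps_norm_nonneg s in \<open>auto simp: ps_summable_def\<close>)
  have fcomp: "(\<lambda>mn. \<Sum>\<^sub>\<infinity>k. R k mn) = fcomp c P Q"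
    by (rule ext) (simp add: fcomp_as_infsum[where P=P and Q=Q, OF P0 Q0] R_def)
  note family = ps_family_sum[OF s R norms, unfolded fcomp]
  show "ps_summable (fcomp c P Q) s" by (rule family(1))
  assume z: "z \<in> polydisc s"
  have "ps_eval (R k) z = ps_term c (ps_eval P z, ps_eval Q z) k" for k
    unfolding R_def ps_scale(3)[OF PQ] ps_fmult(3)[OF s ps_fpow(1)[OF s P] ps_fpow(1)[OF s Q] z]
      ps_fpow(3)[OF s P z] ps_fpow(3)[OF s Q z]
    by (simp add: ps_term_def case_prod_unfold mult.assoc)
  then have "((\<lambda>k. ps_eval (R k) z) has_sum ps_eval c (ps_eval P z, ps_eval Q z)) UNIV"
    using ps_eval_has_sum[OF c ps_eval_pair_in_polydisc[OF P Q P_le Q_le z]] by simp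
  then show "ps_eval (fcomp c P Q) z = ps_eval c (ps_eval P z, ps_eval Q z)"
    using ps_family_sum_eval[OF s R norms z, unfolded fcomp] has_sum_unique by blast
qed

lemma of_nat_mult_power_le:
  fixes r m :: real
  assumes r: "r > 0" and m: "0 \<le> m" "m \<le> r / 2"
  shows "of_nat i * m ^ (i - 1) \<le> 2 / r * r ^ i"
proof (cases i)
  case 0 then show ?thesis using r by simp
next
  case (Suc k)
  have "m ^ k \<le> (r/2) ^ k" by (rule power_mono) (use m in auto)
  then have "of_nat i * m ^ (i - 1) \<le> of_nat i * (r/2) ^ k"
    using Suc by (intro mult_left_mono) auto
  also have "\<dots> = of_nat i / 2 ^ k * r ^ k" by (simp add: power_divide)
  also have "\<dots> \<le> 2 * r ^ k"
  proof -
    have "real i < 2 ^ i" using less_exp[of i] by (metis of_nat_less_iff of_nat_numeral of_nat_power)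
    then have "real i / 2 ^ k \<le> (2::real)" using Suc by (simp add: field_simps)
    then show ?thesis using r by (intro mult_right_mono) auto
  qed
  also have "\<dots> = 2 / r * r ^ i" using r Suc by simp
  finally show ?thesis .
qed

text \<open>The formal counterpart of \<open>(b\<^sup>i - a\<^sup>i) / (b - a) = \<Sum>k<i. a\<^sup>i\<^sup>-\<^sup>1\<^sup>-\<^sup>k b\<^sup>k\<close>.\<close>

definition fpow_diff_quot :: "fps2 \<Rightarrow> fps2 \<Rightarrow> nat \<Rightarrow> fps2" where
  "fpow_diff_quot A B i = (\<lambda>mn. \<Sum>k<i. fmult (fpow A (i - Suc k)) (fpow B k) mn)"

lemma ps_fpow_diff_quot:
  assumes s: "s > 0" and A: "ps_summable A s" and B: "ps_summable B s"
  shows "ps_summable (fpow_diff_quot A B i) s"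
    and "z \<in> polydisc s \<Longrightarrow> ps_eval (fpow_diff_quot A B i) z = (\<Sum>k<i. ps_eval A z ^ (i - Suc k) * ps_eval B z ^ k)"
proof -
  have AB: "ps_summable (fmult (fpow A (i - Suc k)) (fpow B k)) s" for k
    by (rule ps_fmult(1)[OF s ps_fpow(1)[OF s A] ps_fpow(1)[OF s B]])
  note sum = ps_sum_finite[of s "{..<i}" "\<lambda>k. fmult (fpow A (i - Suc k)) (fpow B k)"]
  show "ps_summable (fpow_diff_quot A B i) s"
    using sum AB s by (simp add: fpow_diff_quot_def)
  assume z: "z \<in> polydisc s"
  show "ps_eval (fpow_diff_quot A B i) z = (\<Sum>k<i. ps_eval A z ^ (i - Suc k) * ps_eval B z ^ k)"
    using sum AB s z ps_fmult(3)[OF s ps_fpow(1)[OF s A] ps_fpow(1)[OF s B] z] ps_fpow(3)[OF s A z] ps_fpow(3)[OF s B z]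
    by (simp add: fpow_diff_quot_def)
qed

lemma ps_norm_fpow_diff_quot_le:
  assumes r: "r > 0" and s: "s > 0" and A: "ps_summable A s" and B: "ps_summable B s"
    and A_le: "ps_norm A s \<le> r / 2" and B_le: "ps_norm B s \<le> r / 2"
  shows "ps_norm (fpow_diff_quot A B i) s \<le> 2 / r * r ^ i"
proof -
  define m where "m = r / 2"
  have m: "0 \<le> m" "m \<le> r / 2" using r by (auto simp: m_def)
  have AB: "ps_summable (fmult (fpow A (i - Suc k)) (fpow B k)) s" for k
    by (rule ps_fmult(1)[OF s ps_fpow(1)[OF s A] ps_fpow(1)[OF s B]])
  have term_le: "ps_norm (fmult (fpow A (i - Suc k)) (fpow B k)) s \<le> m ^ (i - 1)" if "k < i" for k
  proof -
    have "ps_norm (fmult (fpow A (i - Suc k)) (fpow B k)) s \<le> m ^ (i - Suc k) * m ^ k"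
      using A_le B_le
      by (intro ps_norm_fmult_le[OF s ps_fpow(1)[OF s A] ps_fpow(1)[OF s B]] ps_norm_fpow_le[OF s])
         (simp_all add: A B m_def)
    also have "\<dots> = m ^ (i - 1)" using that by (simp flip: power_add)
    finally show ?thesis .
  qed
  have "(\<Sum>k<i. ps_norm (fmult (fpow A (i - Suc k)) (fpow B k)) s) \<le> (\<Sum>k<i. m ^ (i - 1))"
    by (rule sum_mono) (use term_le in auto)
  then have "ps_norm (fpow_diff_quot A B i) s \<le> of_nat i * m ^ (i - 1)"
    using ps_sum_finite[of s "{..<i}" "\<lambda>k. fmult (fpow A (i - Suc k)) (fpow B k)"] AB s
    by (auto simp: fpow_diff_quot_def intro: order_trans)
  also have "\<dots> \<le> 2 / r * r ^ i" by (rule of_nat_mult_power_le[OF r m])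
  finally show ?thesis .
qed

text \<open>Hadamard's lemma in the first variable: \<open>c(b, w) - c(a, w) = (b - a) K\<close>, with
  \<open>K = \<Sum>\<^sub>i\<^sub>j c\<^sub>i\<^sub>j (b\<^sup>i - a\<^sup>i) / (b - a) \<cdot> w\<^sup>j\<close>.\<close>

lemma ps_eval_increment_term:
  assumes s: "s > 0" and A: "ps_summable A s" and B: "ps_summable B s" and W: "ps_summable W s"
    and z: "z \<in> polydisc s"
  shows "(ps_eval B z - ps_eval A z) * ps_eval (\<lambda>mn. c k * fmult (fpow_diff_quot A B (fst k)) (fpow W (snd k)) mn) z
    = ps_term c (ps_eval B z, ps_eval W z) k - ps_term c (ps_eval A z, ps_eval W z) k"
proof -
  obtain i j where k: "k = (i,j)" by force
  define a b w where "a = ps_eval A z" "b = ps_eval B z" "w = ps_eval W z"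
  note D = ps_fpow_diff_quot[OF s A B]
  let ?S = "\<Sum>l<i. a ^ (i - Suc l) * b ^ l"
  have eval: "ps_eval (\<lambda>mn. c k * fmult (fpow_diff_quot A B (fst k)) (fpow W (snd k)) mn) z = c k * ?S * w ^ j"
    unfolding k ps_scale(3)[OF ps_fmult(1)[OF s D(1) ps_fpow(1)[OF s W]]]
      ps_fmult(3)[OF s D(1) ps_fpow(1)[OF s W] z] D(2)[OF z] ps_fpow(3)[OF s W z] a_b_w_def
    by (simp add: mult.assoc)
  have "(b - a) * ps_eval (\<lambda>mn. c k * fmult (fpow_diff_quot A B (fst k)) (fpow W (snd k)) mn) z
      = c k * ((b - a) * ?S) * w ^ j" unfolding eval by (simp add: mult_ac)
  also have "\<dots> = c k * (b ^ i - a ^ i) * w ^ j" using power_diff_sumr2[of b i a] by simp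
  also have "\<dots> = ps_term c (b, w) k - ps_term c (a, w) k" by (simp add: ps_term_def k algebra_simps)
  finally show ?thesis unfolding a_b_w_def .
qed

lemma ps_norm_increment_term_le:
  assumes r: "r > 0" and s: "s > 0" and A: "ps_summable A s" and B: "ps_summable B s" and W: "ps_summable W s"
    and A_le: "ps_norm A s \<le> r / 2" and B_le: "ps_norm B s \<le> r / 2" and W_le: "ps_norm W s \<le> r"
  shows "ps_summable (\<lambda>mn. c k * fmult (fpow_diff_quot A B (fst k)) (fpow W (snd k)) mn) s"
    and "ps_norm (\<lambda>mn. c k * fmult (fpow_diff_quot A B (fst k)) (fpow W (snd k)) mn) s \<le> 2 / r * ps_major c r k"
proof -
  obtain i j where k: "k = (i,j)" by force
  note DW = ps_fmult(1)[OF s ps_fpow_diff_quot(1)[OF s A B] ps_fpow(1)[OF s W]]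
  show "ps_summable (\<lambda>mn. c k * fmult (fpow_diff_quot A B (fst k)) (fpow W (snd k)) mn) s"
    by (rule ps_scale(1)[OF DW])
  have "ps_norm (fmult (fpow_diff_quot A B i) (fpow W j)) s \<le> (2 / r * r ^ i) * r ^ j"
    by (rule ps_norm_fmult_le[OF s ps_fpow_diff_quot(1)[OF s A B] ps_fpow(1)[OF s W]
          ps_norm_fpow_diff_quot_le[OF r s A B A_le B_le] ps_norm_fpow_le[OF s W W_le]])
  then have "norm (c k) * ps_norm (fmult (fpow_diff_quot A B i) (fpow W j)) s \<le> norm (c k) * (2 / r * r ^ i * r ^ j)"
    by (rule mult_left_mono) simp
  then show "ps_norm (\<lambda>mn. c k * fmult (fpow_diff_quot A B (fst k)) (fpow W (snd k)) mn) s \<le> 2 / r * ps_major c r k"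
    unfolding k ps_scale(2)[OF DW] by (simp add: ps_major_def power_add mult_ac)
qed

lemma ps_increment_fst:
  assumes r: "r > 0" and c: "ps_summable c r" and s: "s > 0"
    and A: "ps_summable A s" and B: "ps_summable B s" and W: "ps_summable W s"
    and A_le: "ps_norm A s \<le> r / 2" and B_le: "ps_norm B s \<le> r / 2" and W_le: "ps_norm W s \<le> r / 2"
  obtains K where "ps_summable K s"
    and "\<And>z. z \<in> polydisc s \<Longrightarrow>
      ps_eval c (ps_eval B z, ps_eval W z) - ps_eval c (ps_eval A z, ps_eval W z)
        = (ps_eval B z - ps_eval A z) * ps_eval K z"
proof -
  define R where "R = (\<lambda>k mn. c k * fmult (fpow_diff_quot A B (fst k)) (fpow W (snd k)) mn)"
  have W_le': "ps_norm W s \<le> r" using W_le r by simp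
  have R: "ps_summable (R k) s" "ps_norm (R k) s \<le> 2 / r * ps_major c r k" for k
    unfolding R_def by (rule ps_norm_increment_term_le[OF r s A B W A_le B_le W_le'])+
  have norms: "(\<lambda>k. ps_norm (R k) s) summable_on UNIV"
    by (rule summable_on_comparison_test[OF summable_on_cmult_right[of "ps_major c r" UNIV "2 / r"]])
       (use c R(2) ps_norm_nonneg s in \<open>auto simp: ps_summable_def\<close>)
  define K where "K = (\<lambda>mn. \<Sum>\<^sub>\<infinity>k. R k mn)"
  show ?thesis
  proof (rule that[OF ps_family_sum(1)[OF s R(1) norms, folded K_def]])
    fix z assume z: "z \<in> polydisc s"
    have r_le: "r / 2 \<le> r" using r by simp
    have in_r: "(ps_eval B z, ps_eval W z) \<in> polydisc r" "(ps_eval A z, ps_eval W z) \<in> polydisc r"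
      using ps_eval_pair_in_polydisc[OF B W B_le W_le z] ps_eval_pair_in_polydisc[OF A W A_le W_le z]
      by (auto intro: polydisc_mono[OF _ r_le])
    have "((\<lambda>k. (ps_eval B z - ps_eval A z) * ps_eval (R k) z) has_sum
        ps_eval c (ps_eval B z, ps_eval W z) - ps_eval c (ps_eval A z, ps_eval W z)) UNIV"
      using has_sum_diff[OF ps_eval_has_sum[OF c in_r(1)] ps_eval_has_sum[OF c in_r(2)]]
        ps_eval_increment_term[OF s A B W z] by (simp add: R_def)
    moreover have "((\<lambda>k. (ps_eval B z - ps_eval A z) * ps_eval (R k) z) has_sum
        (ps_eval B z - ps_eval A z) * ps_eval K z) UNIV"
      by (rule has_sum_cmult_right[OF ps_family_sum_eval[OF s R(1) norms z, folded K_def]])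
    ultimately show "ps_eval c (ps_eval B z, ps_eval W z) - ps_eval c (ps_eval A z, ps_eval W z)
        = (ps_eval B z - ps_eval A z) * ps_eval K z"
      using has_sum_unique by blast
  qed
qed

lemma ps_fswap:
  assumes A: "ps_summable A s"
  shows "ps_summable (fswap A) s" and "ps_eval (fswap A) z = ps_eval A (snd z, fst z)"
proof -
  define h where "h = (\<lambda>(m::nat,n::nat). (n,m))"
  have h: "bij_betw h UNIV UNIV" by (rule bij_betwI[where g=h]) (auto simp: h_def)
  have "ps_major (fswap A) s = (\<lambda>x. ps_major A s (h x))"
    by (auto simp: ps_major_def fswap_def h_def add.commute)
  then have "(ps_major (fswap A) s has_sum ps_norm A s) UNIV"
    using has_sum_reindex_bij_betw[OF h, of "ps_major A s"] ps_norm_has_sum[OF A] by simp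
  then show "ps_summable (fswap A) s" by (auto simp: ps_summable_def has_sum_imp_summable)
  have "ps_term (fswap A) z = (\<lambda>x. ps_term A (snd z, fst z) (h x))"
    by (auto simp: ps_term_def fswap_def h_def mult_ac)
  then show "ps_eval (fswap A) z = ps_eval A (snd z, fst z)"
    unfolding ps_eval_def using infsum_reindex_bij_betw[OF h, of "ps_term A (snd z, fst z)"] by simp
qed

definition fps2_divX :: "fps2 \<Rightarrow> fps2" where
  "fps2_divX A = (\<lambda>(i,j). A (Suc i, j))"

lemma funpow_fps2_divX: "(fps2_divX ^^ n) A (i,j) = A (i+n, j)"
  by (induction n arbitrary: i) (auto simp: fps2_divX_def)

lemma ps_summable_divX:
  assumes A: "ps_summable A s" and s: "s > 0" shows "ps_summable (fps2_divX A) s"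
proof -
  define h where "h = (\<lambda>(i::nat, j::nat). (Suc i, j))"
  have inj: "inj_on h UNIV" by (auto simp: h_def inj_on_def)
  have "ps_major A s summable_on (h ` UNIV)"
    using A by (auto simp: ps_summable_def intro: summable_on_subset_banach)
  then have "(ps_major A s \<circ> h) summable_on UNIV" using summable_on_reindex[OF inj] by blast
  then have "(\<lambda>x. inverse s * (ps_major A s \<circ> h) x) summable_on UNIV" by (rule summable_on_cmult_right)
  moreover have "(\<lambda>x. inverse s * (ps_major A s \<circ> h) x) = ps_major (fps2_divX A) s"
    using s by (auto simp: h_def ps_major_def fps2_divX_def field_simps)
  ultimately show ?thesis by (simp add: ps_summable_def)
qed

lemma ps_eval_split_fst:
  assumes A: "ps_summable A s" and s: "s > 0" and z: "z \<in> polydisc s"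
  shows "ps_eval A z = ps_eval A (0, snd z) + fst z * ps_eval (fps2_divX A) z"
proof -
  define A0 where "A0 = (\<lambda>(i,j). if i = 0 then A (i,j) else 0)"
  have A0: "ps_summable A0 s"
    unfolding ps_summable_def
    by (rule summable_on_comparison_test[where f="ps_major A s"])
       (use A s in \<open>auto simp: ps_summable_def ps_major_def A0_def split: prod.splits\<close>)
  have "ps_term A0 z = ps_term A (0, snd z)" by (auto simp: ps_term_def A0_def)
  then have A0_eval: "ps_eval A0 z = ps_eval A (0, snd z)" by (simp add: ps_eval_def)
  have split: "A = (\<lambda>mn. A0 mn + fps2_shift 1 0 (fps2_divX A) mn)"
  proof
    fix mn :: "nat \<times> nat"
    obtain m n where mn: "mn = (m,n)" by force
    show "A mn = A0 mn + fps2_shift 1 0 (fps2_divX A) mn"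
      by (cases m) (simp_all add: A0_def fps2_shift_def fps2_divX_def mn)
  qed
  have "ps_eval A z = ps_eval (\<lambda>mn. A0 mn + fps2_shift 1 0 (fps2_divX A) mn) z"
    by (rule arg_cong[OF split])
  also have "\<dots> = ps_eval A0 z + ps_eval (fps2_shift 1 0 (fps2_divX A)) z"
    using ps_add(3)[OF _ A0 ps_shift(1)[OF ps_summable_divX[OF A s]] z] s by simp
  also have "\<dots> = ps_eval A (0, snd z) + fst z * ps_eval (fps2_divX A) z"
    using ps_shift(3)[OF ps_summable_divX[OF A s] z] A0_eval by simp
  finally show ?thesis .
qed

text \<open>The values on the axis differ from nearby values off the axis by \<open>x\<close> times a bounded function.\<close>

lemma ps_eval_axis_eq_0:
  assumes A: "ps_summable A s" and s: "s > 0"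
    and off_axis: "\<And>z. z \<in> polydisc s \<Longrightarrow> fst z \<noteq> 0 \<Longrightarrow> ps_eval A z = 0"
    and w: "norm w \<le> s"
  shows "ps_eval A (0, w) = 0"
proof (rule ccontr)
  assume ne: "ps_eval A (0, w) \<noteq> 0"
  define M where "M = ps_norm (fps2_divX A) s"
  have M: "M \<ge> 0" using ps_norm_nonneg s by (simp add: M_def)
  define t where "t = min s (norm (ps_eval A (0, w)) / (2 * (M + 1)))"
  have t: "t > 0" "t \<le> s" using s ne M by (auto simp: t_def)
  define z where "z = (complex_of_real t, w)"
  have z: "z \<in> polydisc s" using t w by (auto simp: z_def polydisc_def)
  have "ps_eval A (0, w) = - (of_real t * ps_eval (fps2_divX A) z)"
    using ps_eval_split_fst[OF A s z] off_axis[OF z] t by (simp add: z_def add_eq_0_iff)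
  then have "norm (ps_eval A (0, w)) = t * norm (ps_eval (fps2_divX A) z)"
    using t by (simp add: norm_mult)
  also have "\<dots> \<le> t * M"
    using norm_ps_eval_le[OF ps_summable_divX[OF A s] z] t by (simp add: M_def mult_left_mono)
  also have "\<dots> \<le> norm (ps_eval A (0, w)) / (2 * (M + 1)) * M"
    using M by (intro mult_right_mono) (auto simp: t_def)
  also have "\<dots> < norm (ps_eval A (0, w))"
  proof -
    have "M / (2 * (M + 1)) < 1" using M by (simp add: field_simps)
    then have "norm (ps_eval A (0, w)) * (M / (2 * (M + 1))) < norm (ps_eval A (0, w)) * 1"
      using ne by (intro mult_strict_left_mono) auto
    then show ?thesis by (simp add: field_simps)
  qed
  finally show False by simp
qed

lemma ps_eval_divX_eq_0:
  assumes A: "ps_summable A s" and s: "s > 0" and zero: "\<And>z. z \<in> polydisc s \<Longrightarrow> ps_eval A z = 0"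
    and z: "z \<in> polydisc s"
  shows "ps_eval (fps2_divX A) z = 0"
proof -
  have axis: "ps_eval A (0, snd z) = 0" if "z \<in> polydisc s" for z
    using zero[of "(0, snd z)"] that s by (auto simp: polydisc_def)
  have off_axis: "ps_eval (fps2_divX A) z = 0" if z: "z \<in> polydisc s" "fst z \<noteq> 0" for z
    using ps_eval_split_fst[OF A s z(1)] zero[OF z(1)] axis[OF z(1)] z(2) by simp
  show ?thesis
  proof (cases "fst z = 0")
    case True
    then have "z = (0, snd z)" by (cases z) auto
    moreover have "ps_eval (fps2_divX A) (0, snd z) = 0"
      by (rule ps_eval_axis_eq_0[OF ps_summable_divX[OF A s] s off_axis])
         (use z in \<open>auto simp: polydisc_def\<close>)
    ultimately show ?thesis by simp
  qed (use off_axis z in auto)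
qed

lemma ps_eval_funpow_divX_eq_0:
  assumes A: "ps_summable A s" and s: "s > 0" and zero: "\<And>z. z \<in> polydisc s \<Longrightarrow> ps_eval A z = 0"
  shows "ps_summable ((fps2_divX ^^ n) A) s \<and> (\<forall>z\<in>polydisc s. ps_eval ((fps2_divX ^^ n) A) z = 0)"
proof (induction n)
  case (Suc n)
  then show ?case using ps_summable_divX[OF _ s] ps_eval_divX_eq_0[OF _ s] by simp
qed (use A zero in simp)

text \<open>Peel off powers of \<open>x\<close>, then, after swapping the variables, powers of \<open>y\<close>, and read off
  the constant term.\<close>

lemma ps_coeffs_eq_0:
  assumes A: "ps_summable A s" and s: "s > 0" and zero: "\<And>z. z \<in> polydisc s \<Longrightarrow> ps_eval A z = 0"
  shows "A mn = 0"
proof -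
  obtain m n where mn: "mn = (m,n)" by force
  define B where "B = fswap ((fps2_divX ^^ m) A)"
  note Am = ps_eval_funpow_divX_eq_0[OF A s zero, of m]
  have B: "ps_summable B s" unfolding B_def using ps_fswap(1) Am by blast
  have "ps_eval B z = 0" if "z \<in> polydisc s" for z
    using ps_fswap(2)[of "(fps2_divX ^^ m) A" s z] Am that by (simp add: B_def swap_in_polydisc_iff)
  then have "ps_eval ((fps2_divX ^^ n) B) 0 = 0"
    using ps_eval_funpow_divX_eq_0[OF B s, of n] zero_in_polydisc s by simp
  then show ?thesis
    by (simp add: ps_eval_zero funpow_fps2_divX B_def fswap_def mn)
qed

section \<open>Convergent germs\<close>

definition ps_expansion :: "fps2 \<Rightarrow> real \<Rightarrow> (complex \<times> complex \<Rightarrow> complex) \<Rightarrow> bool" where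
  "ps_expansion c s g \<longleftrightarrow> s > 0 \<and> ps_summable c s \<and> (\<forall>z\<in>polydisc s. g z = ps_eval c z)"

lemma ps_expansionI: "s > 0 \<Longrightarrow> ps_summable c s \<Longrightarrow> (\<And>z. z \<in> polydisc s \<Longrightarrow> g z = ps_eval c z) \<Longrightarrow> ps_expansion c s g"
  unfolding ps_expansion_def by blast

lemma ps_expansionD:
  assumes "ps_expansion c s g"
  shows "s > 0" and "ps_summable c s" and "z \<in> polydisc s \<Longrightarrow> g z = ps_eval c z"
  using assms unfolding ps_expansion_def by blast+

lemma ps_expansion_eval: "s > 0 \<Longrightarrow> ps_summable c s \<Longrightarrow> ps_expansion c s (ps_eval c)"
  by (rule ps_expansionI) auto

lemma ps_expansion_mono: "ps_expansion c s g \<Longrightarrow> 0 < t \<Longrightarrow> t \<le> s \<Longrightarrow> ps_expansion c t g"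
  unfolding ps_expansion_def by (auto intro: ps_summable_mono polydisc_mono)

lemma eventually_nhds0_polydisc:
  "(\<forall>\<^sub>F z in nhds (0::complex \<times> complex). P z) \<longleftrightarrow> (\<exists>e>0. \<forall>z\<in>polydisc e. P z)"
proof
  assume "\<forall>\<^sub>F z in nhds (0::complex \<times> complex). P z"
  then obtain d where d: "d > 0" "\<And>z. dist z 0 < d \<Longrightarrow> P z"
    unfolding eventually_nhds_metric by blast
  have "P z" if "z \<in> polydisc (d/3)" for z
  proof -
    have "norm z \<le> norm (fst z) + norm (snd z)" using norm_Pair_le[of "fst z" "snd z"] by simp
    also have "\<dots> \<le> 2 * d / 3" using that by (auto simp: polydisc_def)
    finally show ?thesis using d by (intro d(2)) auto
  qed
  then show "\<exists>e>0. \<forall>z\<in>polydisc e. P z" using d(1) by (intro exI[of _ "d/3"]) auto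
next
  assume "\<exists>e>0. \<forall>z\<in>polydisc e. P z"
  then obtain e where e: "e > 0" "\<And>z. z \<in> polydisc e \<Longrightarrow> P z" by blast
  have "P z" if "dist z 0 < e" for z
  proof (rule e(2))
    have "norm (fst z) \<le> norm z" "norm (snd z) \<le> norm z"
      using norm_fst_le[of "fst z" "snd z"] norm_snd_le[of "snd z" "fst z"] by auto
    then show "z \<in> polydisc e" using that by (auto simp: polydisc_def)
  qed
  then show "\<forall>\<^sub>F z in nhds (0::complex \<times> complex). P z"
    unfolding eventually_nhds_metric using e(1) by blast
qed

lemma eventually_nhds0_polydiscE:
  assumes "\<forall>\<^sub>F z in nhds (0::complex \<times> complex). P z"
  obtains e where "e > 0" "\<And>z. z \<in> polydisc e \<Longrightarrow> P z"
  using assms[unfolded eventually_nhds0_polydisc] by blast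

lemma eventually_nhds0_polydiscI:
  "e > 0 \<Longrightarrow> (\<And>z. z \<in> polydisc e \<Longrightarrow> P z) \<Longrightarrow> \<forall>\<^sub>F z in nhds (0::complex \<times> complex). P z"
  unfolding eventually_nhds0_polydisc by blast

lemma expands_at0_iff_ps_expansion: "expands_at0 c g \<longleftrightarrow> (\<exists>s. ps_expansion c s g)"
proof
  assume "expands_at0 c g"
  then obtain r where r: "r > 0" "\<And>z1 z2. norm z1 < r \<Longrightarrow> norm z2 < r \<Longrightarrow>
      ((\<lambda>(i,j). c (i,j) * z1 ^ i * z2 ^ j) has_sum g (z1, z2)) UNIV"
    unfolding expands_at0_def by blast
  define s where "s = r / 2"
  have s: "s > 0" "s < r" using r by (auto simp: s_def)
  have ps_term_eq: "ps_term c z = (\<lambda>(i,j). c (i,j) * fst z ^ i * snd z ^ j)" for z by (simp add: ps_term_def)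
  have "ps_term c (of_real s, of_real s) summable_on UNIV"
    unfolding ps_term_eq fst_conv snd_conv by (rule has_sum_imp_summable, rule r(2)) (use s in auto)
  then have "(\<lambda>x. norm (ps_term c (of_real s, of_real s) x)) summable_on UNIV"
    using summable_on_iff_abs_summable_on_complex by blast
  moreover have "(\<lambda>x. norm (ps_term c (of_real s, of_real s) x)) = ps_major c s"
    using s by (auto simp: ps_term_def ps_major_def norm_mult norm_power power_add)
  ultimately have c: "ps_summable c s" by (simp add: ps_summable_def)
  have "g z = ps_eval c z" if "z \<in> polydisc s" for z
  proof -
    have "(ps_term c z has_sum g (fst z, snd z)) UNIV"
      unfolding ps_term_eq by (rule r(2)) (use that s in \<open>auto simp: polydisc_def\<close>)
    then show ?thesis by (simp add: ps_eval_def infsumI)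
  qed
  then show "\<exists>s. ps_expansion c s g" using ps_expansionI[OF s(1) c] by blast
next
  assume "\<exists>s. ps_expansion c s g"
  then obtain s where s: "ps_expansion c s g" by blast
  have "((\<lambda>(i, j). c (i, j) * z1 ^ i * z2 ^ j) has_sum g (z1, z2)) UNIV"
    if "norm z1 < s" "norm z2 < s" for z1 z2
  proof -
    have z: "(z1, z2) \<in> polydisc s" using that by (simp add: polydisc_def)
    show ?thesis
      using ps_eval_has_sum[OF ps_expansionD(2)[OF s] z] ps_expansionD(3)[OF s z]
      by (simp add: ps_term_def)
  qed
  then show "expands_at0 c g" unfolding expands_at0_def using ps_expansionD(1)[OF s] by blast
qed

lemma conv0_iff_ps_expansion: "conv0 g \<longleftrightarrow> (\<exists>c s. ps_expansion c s g)"
  unfolding conv0_def expands_at0_iff_ps_expansion by blast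

lemma ps_expansion_unique:
  assumes c: "ps_expansion c s g" and d: "ps_expansion d t h" and eq: "\<forall>\<^sub>F z in nhds 0. g z = h z"
  shows "c = d"
proof
  fix mn
  obtain e where e: "e > 0" "\<And>z. z \<in> polydisc e \<Longrightarrow> g z = h z"
    using eventually_nhds0_polydiscE[OF eq] by blast
  define u where "u = min (min s t) e"
  have u: "u > 0" "u \<le> s" "u \<le> t" "u \<le> e"
    using e ps_expansionD(1)[OF c] ps_expansionD(1)[OF d] by (auto simp: u_def)
  have cu: "ps_summable c u" by (rule ps_summable_mono[OF ps_expansionD(2)[OF c]]) (use u in auto)
  have du: "ps_summable d u" by (rule ps_summable_mono[OF ps_expansionD(2)[OF d]]) (use u in auto)
  have "ps_eval (\<lambda>mn. c mn - d mn) z = 0" if z: "z \<in> polydisc u" for z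
    using ps_diff(2)[OF _ cu du z] u ps_expansionD(3)[OF c polydisc_mono[OF z u(2)]]
      ps_expansionD(3)[OF d polydisc_mono[OF z u(3)]] e(2)[OF polydisc_mono[OF z u(4)]] by simp
  then have "c mn - d mn = 0"
    by (rule ps_coeffs_eq_0[OF ps_diff(1)[OF less_imp_le[OF u(1)] cu du] u(1)])
  then show "c mn = d mn" by simp
qed

lemma taylor_eqI:
  assumes "ps_expansion c s g" shows "taylor g = c"
proof -
  have "expands_at0 c g" using assms expands_at0_iff_ps_expansion by blast
  then have "expands_at0 (taylor g) g" unfolding taylor_def by (rule someI[where P="\<lambda>c. expands_at0 c g"])
  then obtain t where "ps_expansion (taylor g) t g" using expands_at0_iff_ps_expansion by blast
  then show ?thesis using ps_expansion_unique[OF _ assms] by simp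
qed

lemma conv0_ps_expansion:
  assumes "conv0 g" obtains s where "ps_expansion (taylor g) s g"
  using assms taylor_eqI unfolding conv0_iff_ps_expansion by blast

lemma conv0_common_ps_expansion:
  assumes "conv0 a" "conv0 b"
  obtains s where "ps_expansion (taylor a) s a" "ps_expansion (taylor b) s b"
proof -
  obtain s t where s: "ps_expansion (taylor a) s a" and t: "ps_expansion (taylor b) t b"
    using assms conv0_ps_expansion by metis
  have "min s t > 0" using ps_expansionD(1)[OF s] ps_expansionD(1)[OF t] by simp
  then show ?thesis
    by (intro that[OF ps_expansion_mono[OF s, of "min s t"] ps_expansion_mono[OF t, of "min s t"]]) auto
qed

lemma ps_expansion_conv0: "ps_expansion c s g \<Longrightarrow> conv0 g"
  unfolding conv0_iff_ps_expansion by blast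

lemma taylor_cong:
  assumes "conv0 g" "conv0 h" "\<forall>\<^sub>F z in nhds 0. g z = h z" shows "taylor g = taylor h"
  using assms ps_expansion_unique conv0_ps_expansion by metis

lemma conv0_at_0: "conv0 g \<Longrightarrow> g 0 = taylor g (0,0)"
  by (metis conv0_ps_expansion ps_expansionD zero_in_polydisc ps_eval_zero less_imp_le)

lemma ps_expansion_add:
  "ps_expansion A s a \<Longrightarrow> ps_expansion B s b \<Longrightarrow> ps_expansion (\<lambda>mn. A mn + B mn) s (\<lambda>z. a z + b z)"
  unfolding ps_expansion_def using ps_add(1,3) by (metis less_imp_le)

lemma ps_expansion_diff:
  "ps_expansion A s a \<Longrightarrow> ps_expansion B s b \<Longrightarrow> ps_expansion (\<lambda>mn. A mn - B mn) s (\<lambda>z. a z - b z)"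
  unfolding ps_expansion_def using ps_diff by (metis less_imp_le)

lemma ps_expansion_mult:
  "ps_expansion A s a \<Longrightarrow> ps_expansion B s b \<Longrightarrow> ps_expansion (fmult A B) s (\<lambda>z. a z * b z)"
  unfolding ps_expansion_def using ps_fmult(1,3) by metis

lemma ps_expansion_swap:
  "ps_expansion A s a \<Longrightarrow> ps_expansion (fswap A) s (\<lambda>z. a (snd z, fst z))"
  unfolding ps_expansion_def using ps_fswap swap_in_polydisc_iff by metis

lemma ps_expansion_monom: "ps_expansion (fps2_monom c i j) 1 (\<lambda>z. c * fst z ^ i * snd z ^ j)"
  by (rule ps_expansionI) (simp_all add: ps_monom)

lemma conv0_const: "conv0 (\<lambda>z. c)"
  using ps_expansion_conv0[OF ps_expansion_monom[of c 0 0]] by simp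

lemma conv0_fst: "conv0 fst"
  using ps_expansion_conv0[OF ps_expansion_monom[of 1 1 0]] by simp

lemma conv0_snd: "conv0 snd"
  using ps_expansion_conv0[OF ps_expansion_monom[of 1 0 1]] by simp

lemma conv0_add: "conv0 a \<Longrightarrow> conv0 b \<Longrightarrow> conv0 (\<lambda>z. a z + b z)"
  by (metis conv0_common_ps_expansion ps_expansion_add ps_expansion_conv0)

lemma conv0_diff: "conv0 a \<Longrightarrow> conv0 b \<Longrightarrow> conv0 (\<lambda>z. a z - b z)"
  by (metis conv0_common_ps_expansion ps_expansion_diff ps_expansion_conv0)

lemma conv0_mult: "conv0 a \<Longrightarrow> conv0 b \<Longrightarrow> conv0 (\<lambda>z. a z * b z)"
  by (metis conv0_common_ps_expansion ps_expansion_mult ps_expansion_conv0)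

lemma taylor_mult: "conv0 a \<Longrightarrow> conv0 b \<Longrightarrow> taylor (\<lambda>z. a z * b z) = fmult (taylor a) (taylor b)"
  by (metis conv0_common_ps_expansion ps_expansion_mult taylor_eqI)

lemma conv0_swap: "conv0 a \<Longrightarrow> conv0 (\<lambda>z. a (snd z, fst z))"
  by (metis conv0_ps_expansion ps_expansion_swap ps_expansion_conv0)

lemma taylor_swap: "conv0 a \<Longrightarrow> taylor (\<lambda>z. a (snd z, fst z)) = fswap (taylor a)"
  by (metis conv0_ps_expansion ps_expansion_swap taylor_eqI)

lemma conv0_eventually_small:
  assumes g: "conv0 g" and g0: "g 0 = 0" and e: "e > 0"
  shows "\<forall>\<^sub>F t in at_right 0. ps_expansion (taylor g) t g \<and> ps_norm (taylor g) t \<le> e"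
proof -
  obtain s where s: "ps_expansion (taylor g) s g" using g conv0_ps_expansion by blast
  note s' = ps_expansionD[OF s]
  have "taylor g (0,0) = 0" using conv0_at_0[OF g] g0 by simp
  from ps_norm_eventually_le[OF s'(2,1) this e] show ?thesis
    using eventually_at_right_0_le[OF s'(1)] eventually_at_right_less
    by eventually_elim (auto intro: ps_expansion_mono[OF s])
qed

lemma conv0_comp_taylor:
  assumes a: "conv0 a" and P: "conv0 P" and Q: "conv0 Q" and P0: "P 0 = 0" and Q0: "Q 0 = 0"
  shows "conv0 (\<lambda>z. a (P z, Q z))" and "taylor (\<lambda>z. a (P z, Q z)) = fcomp (taylor a) (taylor P) (taylor Q)"
proof -
  obtain r where r: "ps_expansion (taylor a) r a" using a conv0_ps_expansion by blast
  note r' = ps_expansionD[OF r]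
  have "\<forall>\<^sub>F t in at_right 0. (ps_expansion (taylor P) t P \<and> ps_norm (taylor P) t \<le> r) \<and>
      (ps_expansion (taylor Q) t Q \<and> ps_norm (taylor Q) t \<le> r)"
    by (rule eventually_conj[OF conv0_eventually_small[OF P P0 r'(1)] conv0_eventually_small[OF Q Q0 r'(1)]])
  then obtain s where s: "s > 0" and sP: "ps_expansion (taylor P) s P" "ps_norm (taylor P) s \<le> r"
    and sQ: "ps_expansion (taylor Q) s Q" "ps_norm (taylor Q) s \<le> r"
    by (rule eventually_at_right_0_witness) blast
  note PQ0 = conv0_at_0[OF P, symmetric] conv0_at_0[OF Q, symmetric]
  note comp = ps_fcomp[OF s r'(2) ps_expansionD(2)[OF sP(1)] ps_expansionD(2)[OF sQ(1)] sP(2) sQ(2)]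
  have "ps_expansion (fcomp (taylor a) (taylor P) (taylor Q)) s (\<lambda>z. a (P z, Q z))"
  proof (rule ps_expansionI[OF s comp(1)])
    show "taylor P (0, 0) = 0" "taylor Q (0, 0) = 0" using PQ0 P0 Q0 by simp_all
    fix z assume z: "z \<in> polydisc s"
    have "P z = ps_eval (taylor P) z" "Q z = ps_eval (taylor Q) z"
      using ps_expansionD(3)[OF sP(1) z] ps_expansionD(3)[OF sQ(1) z] by auto
    then show "a (P z, Q z) = ps_eval (fcomp (taylor a) (taylor P) (taylor Q)) z"
      using comp(2)[OF _ _ z] r'(3)[OF ps_eval_pair_in_polydisc[OF ps_expansionD(2)[OF sP(1)]
          ps_expansionD(2)[OF sQ(1)] sP(2) sQ(2) z]] PQ0 P0 Q0 by simp
  qed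
  then show "conv0 (\<lambda>z. a (P z, Q z))" "taylor (\<lambda>z. a (P z, Q z)) = fcomp (taylor a) (taylor P) (taylor Q)"
    by (auto intro: ps_expansion_conv0 taylor_eqI)
qed

definition conv0_endo :: "(complex \<times> complex \<Rightarrow> complex \<times> complex) \<Rightarrow> bool" where
  "conv0_endo \<Phi> \<longleftrightarrow> conv0 (\<lambda>z. fst (\<Phi> z)) \<and> conv0 (\<lambda>z. snd (\<Phi> z)) \<and> \<Phi> 0 = 0"

lemma conv0_endoD:
  assumes "conv0_endo \<Phi>"
  shows "conv0 (\<lambda>z. fst (\<Phi> z))" and "conv0 (\<lambda>z. snd (\<Phi> z))" and "\<Phi> 0 = 0"
  using assms unfolding conv0_endo_def by blast+

lemma conv0_compose: "conv0 a \<Longrightarrow> conv0_endo \<Phi> \<Longrightarrow> conv0 (\<lambda>z. a (\<Phi> z))"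
  using conv0_comp_taylor(1)[of a "\<lambda>z. fst (\<Phi> z)" "\<lambda>z. snd (\<Phi> z)"]
  by (simp add: conv0_endo_def zero_prod_def)

lemma conv0_endo_id: "conv0_endo (\<lambda>z. z)"
  by (simp add: conv0_endo_def conv0_fst conv0_snd)

lemma conv0_endo_sigma: "conv0_endo sigma"
  by (simp add: conv0_endo_def sigma_def conv0_fst conv0_snd zero_prod_def)

lemma conv0_endo_compose:
  assumes \<Phi>: "conv0_endo \<Phi>" and \<Psi>: "conv0_endo \<Psi>" shows "conv0_endo (\<lambda>z. \<Phi> (\<Psi> z))"
  unfolding conv0_endo_def
  using conv0_compose[OF conv0_endoD(1)[OF \<Phi>] \<Psi>] conv0_compose[OF conv0_endoD(2)[OF \<Phi>] \<Psi>]
    conv0_endoD(3)[OF \<Phi>] conv0_endoD(3)[OF \<Psi>] by simp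

lemma conv0_endo_funpow: "conv0_endo \<Phi> \<Longrightarrow> conv0_endo (\<Phi> ^^ n)"
  by (induction n) (simp_all add: conv0_endo_id conv0_endo_compose id_def comp_def)

lemma isCont_conv0:
  assumes "conv0 a" shows "isCont a 0"
proof -
  obtain s where s: "ps_expansion (taylor a) s a" using assms conv0_ps_expansion by blast
  note s' = ps_expansionD[OF s]
  define M where "M = ps_norm (taylor a) s"
  have M: "M \<ge> 0" using s'(1) ps_norm_nonneg by (simp add: M_def)
  have "\<forall>\<^sub>F z in nhds 0. dist (a z) (a 0) < e" if e: "e > 0" for e
  proof (rule eventually_nhds0_polydiscI)
    define t where "t = min s (e * s / (2 * (M + 1)))"
    show t: "t > 0" using s'(1) e M by (simp add: t_def)
    have "t / s * M < e"
    proof -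
      have "t / s \<le> (e * s / (2 * (M + 1))) / s"
        by (rule divide_right_mono) (use s'(1) in \<open>auto simp: t_def\<close>)
      also have "\<dots> = e / (2 * (M + 1))" using s'(1) by simp
      finally have "t / s * M \<le> e / (2 * (M + 1)) * M"
        using M by (rule mult_right_mono)
      also have "\<dots> = e * (M / (2 * (M + 1)))" by simp
      also have "\<dots> < e"
        using mult_strict_left_mono[of "M / (2 * (M + 1))" 1 e] e M by (simp add: field_simps)
      finally show ?thesis .
    qed
    fix z assume z: "z \<in> polydisc t"
    have "t \<le> s" by (simp add: t_def)
    then have "norm (a z - a 0) \<le> t / s * M"
      using norm_ps_eval_sub_const_le[OF s'(2,1) _ _ z] t s'(3)[OF polydisc_mono[OF z]]
        conv0_at_0[OF assms] by (simp add: M_def)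
    with \<open>t / s * M < e\<close> show "dist (a z) (a 0) < e" by (simp add: dist_norm)
  qed
  then have "(a \<longlongrightarrow> a 0) (nhds 0)" by (rule tendstoI)
  then show ?thesis by (simp add: isCont_def tendsto_at_iff_tendsto_nhds)
qed

lemma eventually_nhds0_compose:
  assumes \<Phi>: "conv0_endo \<Phi>" and P: "\<forall>\<^sub>F z in nhds 0. P z"
  shows "\<forall>\<^sub>F z in nhds 0. P (\<Phi> z)"
proof -
  have "isCont (\<lambda>z. (fst (\<Phi> z), snd (\<Phi> z))) 0"
    using isCont_conv0[OF conv0_endoD(1)[OF \<Phi>]] isCont_conv0[OF conv0_endoD(2)[OF \<Phi>]] by (rule isCont_Pair)
  then have "(\<Phi> \<longlongrightarrow> \<Phi> 0) (nhds 0)" by (simp add: isCont_def tendsto_at_iff_tendsto_nhds)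
  then show ?thesis using P conv0_endoD(3)[OF \<Phi>] by (simp add: filterlim_iff)
qed

lemma eventually_nhds0_swap:
  fixes P :: "complex \<times> complex \<Rightarrow> bool"
  assumes "\<forall>\<^sub>F z in nhds 0. P z" shows "\<forall>\<^sub>F z in nhds 0. P (snd z, fst z)"
proof -
  have "\<forall>\<^sub>F z in nhds 0. P (sigma z)" by (rule eventually_nhds0_compose[OF conv0_endo_sigma assms])
  then show ?thesis by (simp add: sigma_def)
qed

lemma conv0_divide_fst:
  assumes F: "conv0 F" and axis: "\<forall>\<^sub>F z in nhds 0. fst z = 0 \<longrightarrow> F z = 0"
  obtains G where "conv0 G" "\<forall>\<^sub>F z in nhds 0. F z = fst z * G z"
proof -
  obtain s where s: "ps_expansion (taylor F) s F" using F conv0_ps_expansion by blast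
  obtain e where e: "e > 0" "\<And>z. z \<in> polydisc e \<Longrightarrow> fst z = 0 \<longrightarrow> F z = 0"
    using eventually_nhds0_polydiscE[OF axis] by blast
  define u where "u = min s e"
  have u: "u > 0" "u \<le> s" "u \<le> e" using ps_expansionD(1)[OF s] e by (auto simp: u_def)
  have Fu: "ps_expansion (taylor F) u F" by (rule ps_expansion_mono[OF s u(1,2)])
  note Fu' = ps_expansionD[OF Fu]
  have "F z = fst z * ps_eval (fps2_divX (taylor F)) z" if z: "z \<in> polydisc u" for z
  proof -
    have z0: "(0, snd z) \<in> polydisc u" using z u by (auto simp: polydisc_def)
    have "ps_eval (taylor F) (0, snd z) = 0"
      using e(2)[OF polydisc_mono[OF z0 u(3)]] Fu'(3)[OF z0] by simp
    then show ?thesis using ps_eval_split_fst[OF Fu'(2,1) z] Fu'(3)[OF z] by simp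
  qed
  then have "\<forall>\<^sub>F z in nhds 0. F z = fst z * ps_eval (fps2_divX (taylor F)) z"
    by (rule eventually_nhds0_polydiscI[OF u(1)])
  moreover have "conv0 (ps_eval (fps2_divX (taylor F)))"
    by (rule ps_expansion_conv0[OF ps_expansion_eval[OF u(1) ps_summable_divX[OF Fu'(2,1)]]])
  ultimately show ?thesis by (rule that[rotated])
qed

lemma conv0_cancel_fst:
  assumes A: "conv0 A" and B: "conv0 B" and eq: "\<forall>\<^sub>F z in nhds 0. fst z * A z = fst z * B z"
  shows "\<forall>\<^sub>F z in nhds 0. A z = B z"
proof -
  obtain s where s: "ps_expansion (taylor (\<lambda>z. A z - B z)) s (\<lambda>z. A z - B z)"
    using conv0_diff[OF A B] conv0_ps_expansion by blast
  obtain e where e: "e > 0" "\<And>z. z \<in> polydisc e \<Longrightarrow> fst z * A z = fst z * B z"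
    using eventually_nhds0_polydiscE[OF eq] by blast
  define u where "u = min s e"
  have u: "u > 0" "u \<le> s" "u \<le> e" using ps_expansionD(1)[OF s] e by (auto simp: u_def)
  note d = ps_expansionD[OF ps_expansion_mono[OF s u(1,2)]]
  have off_axis: "ps_eval (taylor (\<lambda>z. A z - B z)) z = 0" if "z \<in> polydisc u" "fst z \<noteq> 0" for z
    using d(3)[OF that(1)] e(2)[OF polydisc_mono[OF that(1) u(3)]] that(2) by simp
  have "A z = B z" if z: "z \<in> polydisc u" for z
  proof (cases "fst z = 0")
    case True
    then have "z = (0, snd z)" by (cases z) auto
    moreover have "ps_eval (taylor (\<lambda>z. A z - B z)) (0, snd z) = 0"
      by (rule ps_eval_axis_eq_0[OF d(2,1) off_axis]) (use z in \<open>auto simp: polydisc_def\<close>)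
    ultimately show ?thesis using d(3)[OF z] by simp
  next
    case False
    then show ?thesis using off_axis[OF z False] d(3)[OF z] by simp
  qed
  then show ?thesis by (rule eventually_nhds0_polydiscI[OF u(1)])
qed

lemma conv0_divide_coordinate:
  assumes x: "x \<in> {fst, snd}" and F: "conv0 F" and axis: "\<forall>\<^sub>F z in nhds 0. x z = 0 \<longrightarrow> F z = 0"
  obtains G where "conv0 G" "\<forall>\<^sub>F z in nhds 0. F z = x z * G z"
proof (cases "x = fst")
  case True
  then show ?thesis using conv0_divide_fst[OF F] axis that by blast
next
  case False
  then have x: "x = snd" using x by auto
  have "\<forall>\<^sub>F z in nhds 0. fst z = 0 \<longrightarrow> F (snd z, fst z) = 0"
    using eventually_nhds0_swap[OF axis] x by simp
  then obtain G where G: "conv0 G" "\<forall>\<^sub>F z in nhds 0. F (snd z, fst z) = fst z * G z"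
    using conv0_divide_fst[OF conv0_swap[OF F]] by blast
  have "\<forall>\<^sub>F z in nhds 0. F z = snd z * G (snd z, fst z)"
    using eventually_nhds0_swap[OF G(2)] by simp
  then show ?thesis using that[OF conv0_swap[OF G(1)]] x by simp
qed

lemma conv0_cancel_coordinate:
  assumes x: "x \<in> {fst, snd}" and A: "conv0 A" and B: "conv0 B"
    and eq: "\<forall>\<^sub>F z in nhds 0. x z * A z = x z * B z"
  shows "\<forall>\<^sub>F z in nhds 0. A z = B z"
proof (cases "x = fst")
  case True
  then show ?thesis using conv0_cancel_fst[OF A B] eq by simp
next
  case False
  then have x: "x = snd" using x by auto
  have "\<forall>\<^sub>F z in nhds 0. fst z * A (snd z, fst z) = fst z * B (snd z, fst z)"
    using eventually_nhds0_swap[OF eq] x by simp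
  then have "\<forall>\<^sub>F z in nhds 0. A (snd z, fst z) = B (snd z, fst z)"
    by (rule conv0_cancel_fst[OF conv0_swap[OF A] conv0_swap[OF B]])
  then show ?thesis using eventually_nhds0_swap by fastforce
qed

definition fps2_geometric :: fps2 where
  "fps2_geometric = (\<lambda>(i,j). if j = 0 then 1 else 0)"

lemma ps_expansion_geometric: "ps_expansion fps2_geometric (1/2) (\<lambda>z. inverse (1 - fst z))"
proof -
  define h where "h = (\<lambda>i::nat. (i, 0::nat))"
  have inj: "inj_on h UNIV" by (auto simp: h_def inj_on_def)
  have hU: "h ` UNIV = {(i,j). j = 0}" by (auto simp: h_def image_def)
  have geometric: "((\<lambda>i::nat. w ^ i) has_sum inverse (1 - w)) UNIV"
    if "norm w < 1" for w :: "'a::{real_normed_field,banach}"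
  proof -
    have "summable (\<lambda>n. norm (w ^ n))" using that by (simp add: norm_power summable_geometric)
    moreover have "(\<lambda>n. w ^ n) sums inverse (1 - w)" using geometric_sums[OF that] by (simp add: inverse_eq_divide)
    ultimately show ?thesis by (rule norm_summable_imp_has_sum)
  qed
  have on_axis: "(g has_sum x) UNIV" if "((g \<circ> h) has_sum x) UNIV" "\<And>i j. j \<noteq> 0 \<Longrightarrow> g (i,j) = 0"
    for g :: "nat \<times> nat \<Rightarrow> 'b::{comm_monoid_add,topological_space}" and x
  proof -
    have "(g has_sum x) (h ` UNIV)" using that(1) has_sum_reindex[OF inj] by blast
    then show ?thesis by (subst (asm) has_sum_cong_neutral[where T=UNIV and g=g]) (auto simp: hU that(2))
  qed
  have "(ps_major fps2_geometric (1/2) has_sum inverse (1 - 1/2)) UNIV"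
  proof (rule on_axis)
    have "(ps_major fps2_geometric (1/2) \<circ> h) = (\<lambda>i. (1/2::real) ^ i)"
      by (auto simp: h_def ps_major_def fps2_geometric_def)
    then show "((ps_major fps2_geometric (1/2) \<circ> h) has_sum inverse (1 - 1/2)) UNIV"
      using geometric[of "1/2::real"] by simp
  qed (auto simp: ps_major_def fps2_geometric_def)
  then have summable: "ps_summable fps2_geometric (1/2)" by (auto simp: ps_summable_def has_sum_imp_summable)
  show ?thesis
  proof (rule ps_expansionI[OF _ summable])
    fix z assume z: "z \<in> polydisc (1/2)"
    have "(ps_term fps2_geometric z has_sum inverse (1 - fst z)) UNIV"
    proof (rule on_axis)
      have "(ps_term fps2_geometric z \<circ> h) = (\<lambda>i. fst z ^ i)" by (auto simp: h_def ps_term_def fps2_geometric_def)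
      moreover have "norm (fst z) < 1" using z by (auto simp: polydisc_def)
      ultimately show "((ps_term fps2_geometric z \<circ> h) has_sum inverse (1 - fst z)) UNIV"
        using geometric[of "fst z"] by simp
    qed (auto simp: ps_term_def fps2_geometric_def)
    then show "inverse (1 - fst z) = ps_eval fps2_geometric z" by (simp add: ps_eval_def infsumI)
  qed simp
qed

lemma conv0_inverse:
  assumes a: "conv0 a" and a0: "a 0 \<noteq> 0"
  shows "conv0 (\<lambda>z. inverse (a z))"
proof -
  define L where "L = (\<lambda>z. 1 - a z * inverse (a 0))"
  have L: "conv0 L" unfolding L_def by (intro conv0_diff conv0_mult conv0_const a)
  have "conv0 (\<lambda>z. inverse (1 - fst (L z, 0)) * inverse (a 0))"
    using conv0_comp_taylor(1)[OF ps_expansion_conv0[OF ps_expansion_geometric] L conv0_const]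
      a0 L_def conv0_mult conv0_const by fastforce
  moreover have "inverse (1 - fst (L z, 0)) * inverse (a 0) = inverse (a z)" for z
    using a0 by (simp add: L_def field_simps)
  ultimately show ?thesis by simp
qed

lemma eventually_conv0_nonzero:
  assumes "conv0 a" "a 0 \<noteq> 0" shows "\<forall>\<^sub>F z in nhds 0. a z \<noteq> 0"
  using isCont_conv0[OF assms(1)] assms(2)
  by (auto simp: isCont_def tendsto_at_iff_tendsto_nhds intro: tendsto_imp_eventually_ne)

lemma conv0_increment_fst:
  assumes a: "conv0 a" and A: "conv0 A" and B: "conv0 B" and W: "conv0 W"
    and A0: "A 0 = 0" and B0: "B 0 = 0" and W0: "W 0 = 0"
  obtains K where "conv0 K" "\<forall>\<^sub>F z in nhds 0. a (B z, W z) - a (A z, W z) = (B z - A z) * K z"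
proof -
  obtain r where r: "ps_expansion (taylor a) r a" using a conv0_ps_expansion by blast
  note r' = ps_expansionD[OF r]
  have r2: "r / 2 > 0" using r'(1) by auto
  have "\<forall>\<^sub>F t in at_right 0. (ps_expansion (taylor A) t A \<and> ps_norm (taylor A) t \<le> r / 2) \<and>
      (ps_expansion (taylor B) t B \<and> ps_norm (taylor B) t \<le> r / 2) \<and>
      (ps_expansion (taylor W) t W \<and> ps_norm (taylor W) t \<le> r / 2)"
    by (intro eventually_conj conv0_eventually_small A B W A0 B0 W0 r2)
  then obtain s where s: "s > 0"
    and sA: "ps_expansion (taylor A) s A" "ps_norm (taylor A) s \<le> r / 2"
    and sB: "ps_expansion (taylor B) s B" "ps_norm (taylor B) s \<le> r / 2"
    and sW: "ps_expansion (taylor W) s W" "ps_norm (taylor W) s \<le> r / 2"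
    by (rule eventually_at_right_0_witness) blast
  note A' = ps_expansionD[OF sA(1)] and B' = ps_expansionD[OF sB(1)] and W' = ps_expansionD[OF sW(1)]
  obtain K where K: "ps_summable K s"
    and inc: "\<And>z. z \<in> polydisc s \<Longrightarrow>
      ps_eval (taylor a) (ps_eval (taylor B) z, ps_eval (taylor W) z)
        - ps_eval (taylor a) (ps_eval (taylor A) z, ps_eval (taylor W) z)
        = (ps_eval (taylor B) z - ps_eval (taylor A) z) * ps_eval K z"
    using ps_increment_fst[OF r'(1,2) s A'(2) B'(2) W'(2) sA(2) sB(2) sW(2)] by blast
  have "a (B z, W z) - a (A z, W z) = (B z - A z) * ps_eval K z" if z: "z \<in> polydisc s" for z
  proof -
    have r_le: "r / 2 \<le> r" using r'(1) by simp
    have "(B z, W z) \<in> polydisc r" "(A z, W z) \<in> polydisc r"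
      using ps_eval_pair_in_polydisc[OF B'(2) W'(2) sB(2) sW(2) z] ps_eval_pair_in_polydisc[OF A'(2) W'(2) sA(2) sW(2) z]
        A'(3)[OF z] B'(3)[OF z] W'(3)[OF z] by (auto intro: polydisc_mono[OF _ r_le])
    then show ?thesis using inc[OF z] r'(3) A'(3)[OF z] B'(3)[OF z] W'(3)[OF z] by simp
  qed
  then have "\<forall>\<^sub>F z in nhds 0. a (B z, W z) - a (A z, W z) = (B z - A z) * ps_eval K z"
    by (rule eventually_nhds0_polydiscI[OF s])
  then show ?thesis by (rule that[OF ps_expansion_conv0[OF ps_expansion_eval[OF s K]]])
qed

lemma conv0_hadamard:
  assumes a: "conv0 a" and U: "conv0 U" and V: "conv0 V" and U0: "U 0 = 0" and V0: "V 0 = 0"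
  obtains K1 K2 where "conv0 K1" "conv0 K2"
    "\<forall>\<^sub>F z in nhds 0. a (fst z + U z, snd z + V z) - a z = U z * K1 z + V z * K2 z"
proof -
  have fst0: "fst (0::complex \<times> complex) = 0" and snd0: "snd (0::complex \<times> complex) = 0" by simp_all
  obtain K1 where K1: "conv0 K1"
    "\<forall>\<^sub>F z in nhds 0. a (fst z + U z, snd z + V z) - a (fst z, snd z + V z) = U z * K1 z"
    using conv0_increment_fst[OF a conv0_fst conv0_add[OF conv0_fst U] conv0_add[OF conv0_snd V]] fst0 snd0 U0 V0
    by auto
  obtain K2 where K2: "conv0 K2"
    "\<forall>\<^sub>F z in nhds 0. a (fst z, snd z + V z) - a (fst z, snd z) = V z * K2 z"
    using conv0_increment_fst[OF conv0_swap[OF a] conv0_snd conv0_add[OF conv0_snd V] conv0_fst] fst0 snd0 V0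
    by auto
  have "\<forall>\<^sub>F z in nhds 0. a (fst z + U z, snd z + V z) - a z = U z * K1 z + V z * K2 z"
    using K1(2) K2(2) by eventually_elim (simp add: algebra_simps)
  then show ?thesis by (rule that[OF K1(1) K2(1)])
qed

section \<open>Formal identities by truncation\<close>

definition fps2_compose :: "fps2 \<Rightarrow> (complex \<times> complex \<Rightarrow> complex \<times> complex) \<Rightarrow> fps2" where
  "fps2_compose a \<Phi> = fcomp a (taylor (\<lambda>z. fst (\<Phi> z))) (taylor (\<lambda>z. snd (\<Phi> z)))"

lemma taylor_compose: "conv0 a \<Longrightarrow> conv0_endo \<Phi> \<Longrightarrow> taylor (\<lambda>z. a (\<Phi> z)) = fps2_compose (taylor a) \<Phi>"
  using conv0_comp_taylor(2)[of a "\<lambda>z. fst (\<Phi> z)" "\<lambda>z. snd (\<Phi> z)"]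
  by (simp add: conv0_endo_def fps2_compose_def zero_prod_def)

definition fps2_trunc :: "nat \<Rightarrow> fps2 \<Rightarrow> fps2" where
  "fps2_trunc N a = (\<lambda>(i,j). if i + j \<le> N then a (i,j) else 0)"

lemma fps2_trunc_trunc [simp]: "fps2_trunc N (fps2_trunc N a) = fps2_trunc N a"
  by (auto simp: fps2_trunc_def)

lemma conv0_taylor_trunc:
  shows "conv0 (ps_eval (fps2_trunc N a))" and "taylor (ps_eval (fps2_trunc N a)) = fps2_trunc N a"
proof -
  have "ps_summable (fps2_trunc N a) 1"
    by (rule ps_finite_support(1)[where B="{..N} \<times> {..N}"]) (auto simp: fps2_trunc_def split: if_splits)
  then have "ps_expansion (fps2_trunc N a) 1 (ps_eval (fps2_trunc N a))" by (simp add: ps_expansion_eval)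
  then show "conv0 (ps_eval (fps2_trunc N a))" "taylor (ps_eval (fps2_trunc N a)) = fps2_trunc N a"
    by (auto intro: ps_expansion_conv0 taylor_eqI)
qed

text \<open>Coefficient \<open>(m, n)\<close> of a product or a composition only depends on the truncations of the
  factors at order \<open>m + n\<close>. Formal identities can therefore be checked on polynomials, which are
  convergent, where they follow from the corresponding identities of functions.\<close>

lemma fmult_trunc_coeff: "m + n \<le> N \<Longrightarrow> fmult a b (m,n) = fmult (fps2_trunc N a) (fps2_trunc N b) (m,n)"
  unfolding fmult_def prod.case by (intro sum.cong refl) (auto simp: fps2_trunc_def)

lemma fcomp_trunc_coeff: "m + n \<le> N \<Longrightarrow> fcomp a P Q (m,n) = fcomp (fps2_trunc N a) P Q (m,n)"
  unfolding fcomp_def prod.case by (intro sum.cong refl) (auto simp: fps2_trunc_def)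

lemma fps2_trunc_fmult: "fps2_trunc N (fmult a b) = fps2_trunc N (fmult (fps2_trunc N a) (fps2_trunc N b))"
proof (intro ext, clarify)
  fix m n
  show "fps2_trunc N (fmult a b) (m,n) = fps2_trunc N (fmult (fps2_trunc N a) (fps2_trunc N b)) (m,n)"
    using fmult_trunc_coeff[of m n N a b] by (simp add: fps2_trunc_def)
qed

lemma fps2_trunc_fcomp: "fps2_trunc N (fcomp a P Q) = fps2_trunc N (fcomp (fps2_trunc N a) P Q)"
proof (intro ext, clarify)
  fix m n
  show "fps2_trunc N (fcomp a P Q) (m,n) = fps2_trunc N (fcomp (fps2_trunc N a) P Q) (m,n)"
    using fcomp_trunc_coeff[of m n N a P Q] by (simp add: fps2_trunc_def)
qed

lemma fmult_assoc: "fmult (fmult a b) c = fmult a (fmult b c)"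
proof (intro ext, clarify)
  fix m n :: nat
  define N where "N = m + n"
  have N: "m + n \<le> N" by (simp add: N_def)
  let ?a = "fps2_trunc N a" and ?b = "fps2_trunc N b" and ?c = "fps2_trunc N c"
  note conv = conv0_taylor_trunc(1) and tay = conv0_taylor_trunc(2)
  have poly: "fmult (fmult ?a ?b) ?c = fmult ?a (fmult ?b ?c)"
    using taylor_mult[OF conv0_mult[OF conv conv] conv] taylor_mult[OF conv conv0_mult[OF conv conv]]
      taylor_mult[OF conv conv] tay by (simp add: mult.assoc)
  have "fmult (fmult a b) c (m,n) = fmult (fps2_trunc N (fmult a b)) ?c (m,n)" by (rule fmult_trunc_coeff[OF N])
  also have "\<dots> = fmult (fps2_trunc N (fmult ?a ?b)) ?c (m,n)" by (simp only: fps2_trunc_fmult[of N a b])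
  also have "\<dots> = fmult (fmult ?a ?b) ?c (m,n)" using fmult_trunc_coeff[OF N, of "fmult ?a ?b" ?c] by simp
  also have "\<dots> = fmult ?a (fmult ?b ?c) (m,n)" by (simp add: poly)
  also have "\<dots> = fmult ?a (fps2_trunc N (fmult ?b ?c)) (m,n)" using fmult_trunc_coeff[OF N, of ?a "fmult ?b ?c"] by simp
  also have "\<dots> = fmult ?a (fps2_trunc N (fmult b c)) (m,n)" by (simp only: fps2_trunc_fmult[of N b c])
  also have "\<dots> = fmult a (fmult b c) (m,n)" using fmult_trunc_coeff[OF N, of a "fmult b c"] by simp
  finally show "fmult (fmult a b) c (m,n) = fmult a (fmult b c) (m,n)" .
qed

lemma fswap_fmult: "fswap (fmult a b) = fmult (fswap a) (fswap b)"
proof (intro ext, clarify)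
  fix m n
  show "fswap (fmult a b) (m,n) = fmult (fswap a) (fswap b) (m,n)"
    unfolding fswap_def fmult_def prod.case by (rule sum.swap)
qed

lemma fswap_fswap [simp]: "fswap (fswap a) = a"
  by (auto simp: fswap_def)

lemma fps2_compose_fmult:
  assumes \<Phi>: "conv0_endo \<Phi>"
  shows "fps2_compose (fmult u v) \<Phi> = fmult (fps2_compose u \<Phi>) (fps2_compose v \<Phi>)"
proof (intro ext, clarify)
  fix m n :: nat
  define N where "N = m + n"
  have N: "m + n \<le> N" by (simp add: N_def)
  let ?u = "fps2_trunc N u" and ?v = "fps2_trunc N v" and ?T = "\<lambda>a. fps2_compose a \<Phi>"
  note conv = conv0_taylor_trunc(1) and tay = conv0_taylor_trunc(2)
  have poly: "?T (fmult ?u ?v) = fmult (?T ?u) (?T ?v)"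
    using taylor_compose[OF conv0_mult[OF conv conv] \<Phi>] taylor_mult[OF conv conv]
      taylor_mult[OF conv0_compose[OF conv \<Phi>] conv0_compose[OF conv \<Phi>]]
      taylor_compose[OF conv \<Phi>] tay by simp
  have trunc_T: "fps2_trunc N (?T a) = fps2_trunc N (?T (fps2_trunc N a))" for a
    unfolding fps2_compose_def by (rule fps2_trunc_fcomp)
  have T_coeff: "?T a (m,n) = ?T (fps2_trunc N a) (m,n)" for a
    unfolding fps2_compose_def by (rule fcomp_trunc_coeff[OF N])
  have "?T (fmult u v) (m,n) = ?T (fps2_trunc N (fmult ?u ?v)) (m,n)"
    by (simp only: T_coeff[of "fmult u v"] fps2_trunc_fmult[of N u v])
  also have "\<dots> = fmult (?T ?u) (?T ?v) (m,n)" by (simp only: T_coeff[symmetric] poly)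
  also have "\<dots> = fmult (fps2_trunc N (?T ?u)) (fps2_trunc N (?T ?v)) (m,n)" by (rule fmult_trunc_coeff[OF N])
  also have "\<dots> = fmult (?T u) (?T v) (m,n)"
    by (simp only: trunc_T[symmetric] fmult_trunc_coeff[OF N, symmetric])
  finally show "?T (fmult u v) (m,n) = fmult (?T u) (?T v) (m,n)" .
qed

lemma fps2_compose_inverse:
  assumes \<Phi>: "conv0_endo \<Phi>" and \<Psi>: "conv0_endo \<Psi>" and inv: "\<forall>\<^sub>F z in nhds 0. \<Psi> (\<Phi> z) = z"
  shows "fps2_compose (fps2_compose x \<Psi>) \<Phi> = x"
proof (intro ext, clarify)
  fix m n :: nat
  define N where "N = m + n"
  have N: "m + n \<le> N" by (simp add: N_def)
  define h where "h = ps_eval (fps2_trunc N x)"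
  have h: "conv0 h" "taylor h = fps2_trunc N x" using conv0_taylor_trunc by (simp_all add: h_def)
  have T_coeff: "fps2_compose a \<Phi> (m,n) = fps2_compose (fps2_trunc N a) \<Phi> (m,n)" for a
    unfolding fps2_compose_def by (rule fcomp_trunc_coeff[OF N])
  have "\<forall>\<^sub>F z in nhds 0. h (\<Psi> (\<Phi> z)) = h z" using inv by (rule eventually_mono) simp
  then have "taylor (\<lambda>z. h (\<Psi> (\<Phi> z))) = fps2_trunc N x"
    using taylor_cong[OF conv0_compose[OF h(1) conv0_endo_compose[OF \<Psi> \<Phi>]] h(1)] h(2) by simp
  moreover have "taylor (\<lambda>z. h (\<Psi> (\<Phi> z))) = fps2_compose (fps2_compose (fps2_trunc N x) \<Psi>) \<Phi>"
    using taylor_compose[OF conv0_compose[OF h(1) \<Psi>] \<Phi>] taylor_compose[OF h(1) \<Psi>] h(2) by simp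
  ultimately have poly: "fps2_compose (fps2_compose (fps2_trunc N x) \<Psi>) \<Phi> = fps2_trunc N x" by simp
  have "fps2_trunc N (fps2_compose x \<Psi>) = fps2_trunc N (fps2_compose (fps2_trunc N x) \<Psi>)"
    unfolding fps2_compose_def by (rule fps2_trunc_fcomp)
  then have "fps2_compose (fps2_compose x \<Psi>) \<Phi> (m,n)
      = fps2_compose (fps2_trunc N (fps2_compose (fps2_trunc N x) \<Psi>)) \<Phi> (m,n)"
    using T_coeff[of "fps2_compose x \<Psi>"] by simp
  also have "\<dots> = fps2_compose (fps2_compose (fps2_trunc N x) \<Psi>) \<Phi> (m,n)"
    by (rule T_coeff[symmetric])
  also have "\<dots> = x (m,n)" using poly N by (simp add: fps2_trunc_def)
  finally show "fps2_compose (fps2_compose x \<Psi>) \<Phi> (m,n) = x (m,n)" .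
qed

section \<open>Germs preserving \<open>\<xi>\<^sub>1\<xi>\<^sub>2\<close>\<close>

lemma norm_coordinate_le: "x \<in> {fst, snd} \<Longrightarrow> norm (x w) \<le> norm (w :: complex \<times> complex)"
  using norm_fst_le[of "fst w" "snd w"] norm_snd_le[of "snd w" "fst w"] by auto

lemma eventually_norm_sub_derivative_le:
  assumes der: "(F has_derivative L) (at 0)" and F0: "F 0 = 0" and e: "e > 0"
  shows "\<forall>\<^sub>F z in nhds 0. norm (F z - L z) \<le> e * norm z"
proof -
  obtain d where d: "d > 0" "\<And>y. norm y < d \<Longrightarrow> norm (F y - F 0 - L y) \<le> e * norm y"
    using der[unfolded has_derivative_at_alt] e by force
  show ?thesis unfolding eventually_nhds_metric
    by (rule exI[of _ d]) (use d F0 in \<open>auto simp: dist_norm\<close>)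
qed

text \<open>On the axis \<open>a = 0\<close> the product \<open>b (F z) * c (F z) = hprod z\<close> vanishes, while \<open>b (F z)\<close> stays
  close to \<open>b (L z) \<noteq> 0\<close>.\<close>

lemma hprod_invariant_maps_axis:
  fixes F L :: "complex \<times> complex \<Rightarrow> complex \<times> complex" and a b c :: "complex \<times> complex \<Rightarrow> complex"
  assumes inv: "\<forall>\<^sub>F z in nhds 0. hprod (F z) = hprod z" and F0: "F 0 = 0"
    and der: "(F has_derivative L) (at 0)"
    and coords: "a \<in> {fst, snd}" "b \<in> {fst, snd}" "c \<in> {fst, snd}" and bc: "\<And>w. b w * c w = hprod w"
    and k: "k > 0" and lower: "\<And>z. a z = 0 \<Longrightarrow> k * norm z \<le> norm (b (L z))"
  shows "\<forall>\<^sub>F z in nhds 0. a z = 0 \<longrightarrow> c (F z) = 0"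
  using inv eventually_norm_sub_derivative_le[OF der F0 half_gt_zero[OF k]]
proof eventually_elim
  case (elim z)
  show ?case
  proof
    assume az: "a z = 0"
    show "c (F z) = 0"
    proof (cases "z = 0")
      case True then show ?thesis using F0 coords(3) by auto
    next
      case False
      have "norm (b (F z) - b (L z)) \<le> norm (F z - L z)"
        using norm_coordinate_le[OF coords(2), of "F z - L z"] coords(2) by auto
      also have "\<dots> < k * norm z"
        using elim(2) mult_pos_pos[OF k zero_less_norm_iff[THEN iffD2, OF False]] by linarith
      also have "\<dots> \<le> norm (b (L z))" by (rule lower[OF az])
      finally have "b (F z) \<noteq> 0" by auto
      moreover have "b (F z) * c (F z) = 0"
        using bc[of "F z"] elim(1) az coords(1) by (auto simp: hprod_def)
      ultimately show ?thesis by simp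
    qed
  qed
qed

lemma coordinate_axis_point:
  assumes x: "x \<in> {fst, snd}" and e: "e \<ge> 0"
  obtains z :: "complex \<times> complex" where "z \<in> polydisc e" "norm (x z) = e" "norm z = e"
proof (cases "x = fst")
  case True
  then show ?thesis using e by (intro that[of "(of_real e, 0)"]) (auto simp: polydisc_def norm_Pair)
next
  case False
  then have "x = snd" using x by auto
  then show ?thesis using e by (intro that[of "(0, of_real e)"]) (auto simp: polydisc_def norm_Pair)
qed

lemma coordinate_factor_nonzero:
  fixes F L :: "complex \<times> complex \<Rightarrow> complex \<times> complex"
  assumes x: "x \<in> {fst, snd}" and A: "conv0 A"
    and der: "(F has_derivative L) (at 0)" and F0: "F 0 = 0"
    and L: "\<And>\<xi>. fst (L \<xi>) = c * x \<xi>" and c: "c \<noteq> 0"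
    and factor: "\<forall>\<^sub>F z in nhds 0. fst (F z) = x z * A z"
  shows "A 0 \<noteq> 0"
proof
  assume A0: "A 0 = 0"
  have "norm c / 4 > 0" using c by simp
  have "(A \<longlongrightarrow> A 0) (nhds 0)"
    using isCont_conv0[OF A] by (simp add: isCont_def tendsto_at_iff_tendsto_nhds)
  then have "((\<lambda>z. norm (A z)) \<longlongrightarrow> 0) (nhds 0)" using tendsto_norm A0 by fastforce
  then have "\<forall>\<^sub>F z in nhds 0. norm (A z) < norm c / 4"
    using \<open>norm c / 4 > 0\<close> by (rule order_tendstoD(2))
  moreover have "\<forall>\<^sub>F z in nhds 0. norm (x z * A z - c * x z) \<le> norm c / 4 * norm z"
    using factor eventually_norm_sub_derivative_le[OF der F0 \<open>norm c / 4 > 0\<close>]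
  proof eventually_elim
    case (elim z)
    have "norm (fst (F z) - fst (L z)) \<le> norm (F z - L z)"
      using norm_coordinate_le[of fst "F z - L z"] by simp
    then show ?case using elim by (simp add: L)
  qed
  ultimately have "\<forall>\<^sub>F z in nhds 0. norm (A z) < norm c / 4 \<and>
      norm (x z * A z - c * x z) \<le> norm c / 4 * norm z"
    by (rule eventually_conj)
  then obtain e where e: "e > 0" and bounds: "\<And>z. z \<in> polydisc e \<Longrightarrow>
      norm (A z) < norm c / 4 \<and> norm (x z * A z - c * x z) \<le> norm c / 4 * norm z"
    by (rule eventually_nhds0_polydiscE) blast
  obtain z where z: "z \<in> polydisc e" "norm (x z) = e" "norm z = e"
    using coordinate_axis_point[OF x less_imp_le[OF e]] by blast
  note b = bounds[OF z(1)]
  have "norm (x z * A z) \<le> e * (norm c / 4)"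
    using b z(2) e by (simp add: norm_mult)
  have "norm c * e = norm (c * x z)" using z by (simp add: norm_mult)
  also have "\<dots> \<le> norm (x z * A z) + norm (x z * A z - c * x z)"
    by (metis norm_minus_commute norm_triangle_sub)
  also have "\<dots> \<le> e * (norm c / 4) + norm c / 4 * e"
    using \<open>norm (x z * A z) \<le> e * (norm c / 4)\<close> b[THEN conjunct2, unfolded z(3)] by linarith
  finally show False using c e by simp
qed

locale axis_multipliers =
  fixes \<psi> :: "complex \<times> complex \<Rightarrow> complex \<times> complex" and f g :: "complex \<times> complex \<Rightarrow> complex"
  assumes endo: "conv0_endo \<psi>" and conv0_f: "conv0 f" and conv0_g: "conv0 g"
    and fst_eq: "\<forall>\<^sub>F z in nhds 0. fst (\<psi> z) = fst z * (1 + f z)"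
    and snd_eq: "\<forall>\<^sub>F z in nhds 0. snd (\<psi> z) = snd z * (1 + g z)"
    and units: "\<forall>\<^sub>F z in nhds 0. (1 + f z) * (1 + g z) = 1"
begin

text \<open>Both multipliers are \<open>1\<close> modulo \<open>f\<close>: \<open>1 + g = 1 + f (-1 - g)\<close>.\<close>

lemma coordinate_eq:
  assumes x: "x \<in> {fst, snd}"
  obtains H where "conv0 H" "\<forall>\<^sub>F z in nhds 0. x (\<psi> z) = x z * (1 + f z * H z)"
proof (cases "x = fst")
  case True
  then show ?thesis using that[OF conv0_const[of 1]] fst_eq by simp
next
  case False
  then have x: "x = snd" using x by auto
  have "\<forall>\<^sub>F z in nhds 0. snd (\<psi> z) = snd z * (1 + f z * (-1 - g z))"
    using snd_eq units
  proof eventually_elim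
    case (elim z)
    have "1 + g z = 1 + f z * (-1 - g z)" using elim(2) by algebra
    then show ?case using elim(1) by simp
  qed
  then show ?thesis using that[OF conv0_diff[OF conv0_const conv0_g]] x by simp
qed

lemma compose_diff_factor:
  assumes a: "conv0 a"
  obtains K where "conv0 K" "\<forall>\<^sub>F z in nhds 0. a (\<psi> z) - a z = f z * K z"
proof -
  obtain H where H: "conv0 H" "\<forall>\<^sub>F z in nhds 0. snd (\<psi> z) = snd z * (1 + f z * H z)"
    using coordinate_eq[of snd] by blast
  have U: "conv0 (\<lambda>z. fst z * f z)" and V: "conv0 (\<lambda>z. snd z * (f z * H z))"
    by (intro conv0_mult conv0_fst conv0_snd conv0_f H(1))+
  obtain K1 K2 where K: "conv0 K1" "conv0 K2"
    "\<forall>\<^sub>F z in nhds 0. a (fst z + fst z * f z, snd z + snd z * (f z * H z)) - a z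
        = fst z * f z * K1 z + snd z * (f z * H z) * K2 z"
    using conv0_hadamard[OF a U V] by (auto simp: zero_prod_def)
  have "\<forall>\<^sub>F z in nhds 0. a (\<psi> z) - a z = f z * (fst z * K1 z + snd z * H z * K2 z)"
    using K(3) fst_eq H(2)
  proof eventually_elim
    case (elim z)
    have "\<psi> z = (fst z + fst z * f z, snd z + snd z * (f z * H z))"
      using elim(2,3) by (simp add: prod_eq_iff algebra_simps)
    then show ?case using elim(1) by (simp add: algebra_simps)
  qed
  then show ?thesis
    by (rule that[rotated]) (intro conv0_add conv0_mult conv0_fst conv0_snd K(1,2) H(1))
qed

text \<open>Reversibility \<open>\<psi> \<circ> \<sigma> \<circ> \<psi> = \<sigma>\<close> gives \<open>(f \<circ> \<sigma>) \<circ> \<psi> = f\<close>, and \<open>(f \<circ> \<sigma>) \<circ> \<psi> - f \<circ> \<sigma>\<close> is a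
  multiple of \<open>f\<close>.\<close>

lemma swap_mem_conv_ideal:
  assumes rev: "\<forall>\<^sub>F z in nhds 0. sigma (\<psi> (sigma (\<psi> z))) = z"
  shows "f \<circ> sigma \<in> conv_ideal f"
proof -
  define w where "w = f \<circ> sigma"
  have w: "conv0 w" unfolding w_def using conv0_swap[OF conv0_f] by (simp add: comp_def sigma_def)
  have "\<forall>\<^sub>F z in nhds 0. fst (\<psi> (sigma (\<psi> z))) = fst (sigma (\<psi> z)) * (1 + f (sigma (\<psi> z)))"
    by (rule eventually_nhds0_compose[OF conv0_endo_compose[OF conv0_endo_sigma endo] fst_eq])
  then have "\<forall>\<^sub>F z in nhds 0. snd z * ((1 + g z) * (1 + w (\<psi> z))) = snd z * 1"
    using rev snd_eq
  proof eventually_elim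
    case (elim z)
    have "snd z = fst (\<psi> (sigma (\<psi> z)))" using elim(2) by (metis sigma_def snd_conv)
    also have "\<dots> = snd (\<psi> z) * (1 + w (\<psi> z))" using elim(1) by (simp add: sigma_def w_def)
    finally show ?case using elim(3) by (simp add: mult_ac)
  qed
  then have "\<forall>\<^sub>F z in nhds 0. (1 + g z) * (1 + w (\<psi> z)) = 1"
    by (rule conv0_cancel_coordinate[of snd, rotated 3])
       (intro conv0_mult conv0_add conv0_const conv0_g conv0_compose[OF w endo] | simp)+
  then have w_\<psi>: "\<forall>\<^sub>F z in nhds 0. w (\<psi> z) = f z"
    using units
  proof eventually_elim
    case (elim z)
    have "1 + w (\<psi> z) = (1 + f z) * ((1 + g z) * (1 + w (\<psi> z)))" using elim(2) by (simp add: mult.assoc[symmetric])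
    then show ?case using elim(1) by simp
  qed
  obtain K where K: "conv0 K" "\<forall>\<^sub>F z in nhds 0. w (\<psi> z) - w z = f z * K z"
    using compose_diff_factor[OF w] by blast
  have "\<forall>\<^sub>F z in nhds 0. w z = (1 - K z) * f z"
    using K(2) w_\<psi> by eventually_elim (simp add: algebra_simps)
  then show ?thesis
    using w conv0_diff[OF conv0_const K(1)] unfolding conv_ideal_def w_def by blast
qed

text \<open>Comparing the first components of \<open>\<psi> \<circ> \<phi> = \<phi> \<circ> \<psi>\<close> gives \<open>A (1 + f \<circ> \<phi>) = (1 + f H) (A \<circ> \<psi>)\<close>,
  and \<open>A \<circ> \<psi> - A\<close> is a multiple of \<open>f\<close>.\<close>

lemma commuting_mem_conv_ideal:
  assumes \<phi>: "conv0_endo \<phi>" and comm: "\<And>z. \<psi> (\<phi> z) = \<phi> (\<psi> z)"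
    and x: "x \<in> {fst, snd}" and A: "conv0 A" and A0: "A 0 \<noteq> 0"
    and factor: "\<forall>\<^sub>F z in nhds 0. fst (\<phi> z) = x z * A z"
  shows "f \<circ> \<phi> \<in> conv_ideal f"
proof -
  obtain H where H: "conv0 H" "\<forall>\<^sub>F z in nhds 0. x (\<psi> z) = x z * (1 + f z * H z)"
    using coordinate_eq[OF x] by blast
  obtain K where K: "conv0 K" "\<forall>\<^sub>F z in nhds 0. A (\<psi> z) - A z = f z * K z"
    using compose_diff_factor[OF A] by blast
  have "\<forall>\<^sub>F z in nhds 0. x z * (A z * (1 + f (\<phi> z))) = x z * ((1 + f z * H z) * A (\<psi> z))"
    using eventually_nhds0_compose[OF \<phi> fst_eq] eventually_nhds0_compose[OF endo factor] factor H(2)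
  proof eventually_elim
    case (elim z)
    have "x z * (A z * (1 + f (\<phi> z))) = fst (\<psi> (\<phi> z))" using elim(1,3) by simp
    also have "\<dots> = fst (\<phi> (\<psi> z))" by (simp add: comm)
    also have "\<dots> = x z * ((1 + f z * H z) * A (\<psi> z))" using elim(2,4) by simp
    finally show ?case .
  qed
  then have "\<forall>\<^sub>F z in nhds 0. A z * (1 + f (\<phi> z)) = (1 + f z * H z) * A (\<psi> z)"
    by (rule conv0_cancel_coordinate[OF x, rotated 2])
       (intro conv0_mult conv0_add conv0_const A H(1) conv0_f conv0_compose[OF conv0_f \<phi>]
         conv0_compose[OF A endo])+
  then have "\<forall>\<^sub>F z in nhds 0. f (\<phi> z) = inverse (A z) * (H z * A z + K z + f z * H z * K z) * f z"
    using K(2) eventually_conv0_nonzero[OF A A0]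
  proof eventually_elim
    case (elim z)
    have "A z * f (\<phi> z) = (1 + f z * H z) * (A z + f z * K z) - A z"
      using elim(1,2) by (simp add: algebra_simps)
    also have "\<dots> = (H z * A z + K z + f z * H z * K z) * f z" by (simp add: algebra_simps)
    finally show ?case using elim(3) by (simp add: field_simps)
  qed
  moreover have "conv0 (\<lambda>z. inverse (A z) * (H z * A z + K z + f z * H z * K z))"
    by (intro conv0_mult conv0_add conv0_inverse[OF A A0] H(1) A K(1) conv0_f)
  ultimately show ?thesis
    using conv0_compose[OF conv0_f \<phi>] unfolding conv_ideal_def by (auto simp: comp_def)
qed

end

section \<open>Invariance of the ideals\<close>

lemma conv_ideal_compose:
  assumes \<Phi>: "conv0_endo \<Phi>" and f\<Phi>: "f \<circ> \<Phi> \<in> conv_ideal f" and a: "a \<in> conv_ideal f"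
  shows "a \<circ> \<Phi> \<in> conv_ideal f"
proof -
  obtain u where u: "conv0 u" "\<forall>\<^sub>F z in nhds 0. a z = u z * f z" and a0: "conv0 a"
    using a by (auto simp: conv_ideal_def)
  obtain v where v: "conv0 v" "\<forall>\<^sub>F z in nhds 0. f (\<Phi> z) = v z * f z"
    using f\<Phi> by (auto simp: conv_ideal_def)
  have "\<forall>\<^sub>F z in nhds 0. a (\<Phi> z) = (u (\<Phi> z) * v z) * f z"
    using eventually_nhds0_compose[OF \<Phi> u(2)] v(2) by eventually_elim simp
  then show ?thesis
    using conv0_compose[OF a0 \<Phi>] conv0_mult[OF conv0_compose[OF u(1) \<Phi>] v(1)]
    unfolding conv_ideal_def by (auto simp: comp_def)
qed

lemma taylor_mem_formal_ideal:
  assumes f: "conv0 f" and a: "a \<in> conv_ideal f"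
  shows "taylor a \<in> formal_ideal (taylor f)"
proof -
  obtain u where u: "conv0 u" "\<forall>\<^sub>F z in nhds 0. a z = u z * f z" and a0: "conv0 a"
    using a by (auto simp: conv_ideal_def)
  have "taylor a = fmult (taylor u) (taylor f)"
    using taylor_cong[OF a0 conv0_mult[OF u(1) f] u(2)] taylor_mult[OF u(1) f] by simp
  then show ?thesis by (auto simp: formal_ideal_def)
qed

lemma formal_ideal_image_eq:
  assumes T: "\<And>a b. T (fmult a b) = fmult (T a) (T b)" and S: "\<And>a b. S (fmult a b) = fmult (S a) (S b)"
    and TF: "T F \<in> formal_ideal F" and SF: "S F \<in> formal_ideal F" and TS: "\<And>a. T (S a) = a"
  shows "T ` formal_ideal F = formal_ideal F"
proof -
  have closed: "R a \<in> formal_ideal F"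
    if R: "\<And>a b. R (fmult a b) = fmult (R a) (R b)" and RF: "R F \<in> formal_ideal F"
      and a: "a \<in> formal_ideal F" for R a
  proof -
    obtain u v where "a = fmult u F" "R F = fmult v F" using a RF by (auto simp: formal_ideal_def)
    then have "R a = fmult (fmult (R u) v) F" by (simp add: R fmult_assoc)
    then show ?thesis by (auto simp: formal_ideal_def)
  qed
  show ?thesis
  proof
    show "T ` formal_ideal F \<subseteq> formal_ideal F" using closed[OF T TF] by blast
    show "formal_ideal F \<subseteq> T ` formal_ideal F"
    proof
      fix a assume "a \<in> formal_ideal F"
      then show "a \<in> T ` formal_ideal F" using closed[OF S SF] TS by (metis image_eqI)
    qed
  qed
qed

lemma germ_set_eq_image:
  assumes \<Phi>: "\<And>a. a \<in> I \<Longrightarrow> a \<circ> \<Phi> \<in> I" and \<Psi>: "\<And>a. a \<in> I \<Longrightarrow> a \<circ> \<Psi> \<in> I"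
    and inv: "\<forall>\<^sub>F z in nhds 0. \<Psi> (\<Phi> z) = z"
  shows "germ_set_eq ((\<lambda>a. a \<circ> \<Phi>) ` I) I"
  unfolding germ_set_eq_def
proof (intro conjI ballI)
  fix x assume "x \<in> (\<lambda>a. a \<circ> \<Phi>) ` I"
  then have "x \<in> I" using \<Phi> by blast
  then show "\<exists>b\<in>I. \<forall>\<^sub>F \<xi> in nhds 0. x \<xi> = b \<xi>" by (rule bexI[rotated]) simp
next
  fix b assume b: "b \<in> I"
  have "\<forall>\<^sub>F \<xi> in nhds 0. (b \<circ> \<Psi> \<circ> \<Phi>) \<xi> = b \<xi>" using inv by eventually_elim simp
  then show "\<exists>a\<in>(\<lambda>a. a \<circ> \<Phi>) ` I. \<forall>\<^sub>F \<xi> in nhds 0. a \<xi> = b \<xi>" using \<Psi>[OF b] by blast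
qed

lemma eventually_funpow_invariant:
  assumes \<Phi>: "conv0_endo \<Phi>" and inv: "\<forall>\<^sub>F z in nhds 0. h (\<Phi> z) = h z"
  shows "\<forall>\<^sub>F z in nhds 0. h ((\<Phi> ^^ n) z) = h z"
proof (induction n)
  case (Suc n)
  have "\<forall>\<^sub>F z in nhds 0. h (\<Phi> ((\<Phi> ^^ n) z)) = h ((\<Phi> ^^ n) z)"
    by (rule eventually_nhds0_compose[OF conv0_endo_funpow[OF \<Phi>] inv])
  then show ?case using Suc by eventually_elim simp
qed simp

lemma reversible_funpow:
  assumes \<phi>: "conv0_endo \<phi>" and rev: "\<forall>\<^sub>F z in nhds 0. sigma (\<phi> (sigma (\<phi> z))) = z"
  shows "\<forall>\<^sub>F z in nhds 0. sigma ((\<phi> ^^ n) (sigma ((\<phi> ^^ n) z))) = z"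
proof -
  define \<rho> where "\<rho> = (\<lambda>z. sigma (\<phi> (sigma z)))"
  have \<rho>n: "(\<rho> ^^ n) z = sigma ((\<phi> ^^ n) (sigma z))" for n z
    by (induction n arbitrary: z) (simp_all add: \<rho>_def sigma_def)
  have "\<forall>\<^sub>F z in nhds 0. (\<rho> ^^ n) ((\<phi> ^^ n) z) = z"
  proof (induction n)
    case (Suc n)
    have "\<forall>\<^sub>F z in nhds 0. \<rho> (\<phi> ((\<phi> ^^ n) z)) = (\<phi> ^^ n) z"
      unfolding \<rho>_def by (rule eventually_nhds0_compose[OF conv0_endo_funpow[OF \<phi>] rev])
    then show ?case using Suc
    proof eventually_elim
      case (elim z)
      have "(\<rho> ^^ Suc n) ((\<phi> ^^ Suc n) z) = (\<rho> ^^ n) (\<rho> (\<phi> ((\<phi> ^^ n) z)))"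
        by (simp add: funpow_Suc_right funpow_swap1 del: funpow.simps)
      then show ?case using elim by simp
    qed
  qed simp
  then show ?thesis by (simp add: \<rho>n)
qed

lemma hprod_invariant_fst_factor:
  fixes \<phi> :: "complex \<times> complex \<Rightarrow> complex \<times> complex"
  assumes \<phi>: "conv0_endo \<phi>" and hinv: "\<forall>\<^sub>F z in nhds 0. hprod (\<phi> z) = hprod z"
    and lin: "(\<exists>l::complex. l \<noteq> 0 \<and> (\<phi> has_derivative (\<lambda>\<xi>. (l * fst \<xi>, snd \<xi> / l))) (at 0))
              \<or> (\<phi> has_derivative (\<lambda>\<xi>. - sigma \<xi>)) (at 0)"
  obtains x A where "x \<in> {fst, snd}" "conv0 A" "A 0 \<noteq> 0" "\<forall>\<^sub>F z in nhds 0. fst (\<phi> z) = x z * A z"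
proof -
  note \<phi>0 = conv0_endoD(3)[OF \<phi>] and \<phi>1 = conv0_endoD(1)[OF \<phi>]
  have bc: "snd w * fst w = hprod w" for w by (simp add: hprod_def)
  from lin show ?thesis
  proof
    assume "\<exists>l. l \<noteq> 0 \<and> (\<phi> has_derivative (\<lambda>\<xi>. (l * fst \<xi>, snd \<xi> / l))) (at 0)"
    then obtain l where l: "l \<noteq> 0" and der: "(\<phi> has_derivative (\<lambda>\<xi>. (l * fst \<xi>, snd \<xi> / l))) (at 0)"
      by blast
    have "\<forall>\<^sub>F z in nhds 0. fst z = 0 \<longrightarrow> fst (\<phi> z) = 0"
    proof (rule hprod_invariant_maps_axis[OF hinv \<phi>0 der _ _ _ bc])
      show "1 / norm l > 0" using l by simp
      fix z :: "complex \<times> complex" assume "fst z = 0"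
      then show "1 / norm l * norm z \<le> norm (snd (l * fst z, snd z / l))"
        by (cases z) (simp add: norm_Pair norm_divide)
    qed simp_all
    then obtain A where A: "conv0 A" "\<forall>\<^sub>F z in nhds 0. fst (\<phi> z) = fst z * A z"
      using conv0_divide_coordinate[of fst, OF _ \<phi>1] by blast
    have "A 0 \<noteq> 0" by (rule coordinate_factor_nonzero[of fst, OF _ A(1) der \<phi>0 _ l A(2)]) simp_all
    then show ?thesis using that[OF _ A(1) _ A(2)] by simp
  next
    assume der: "(\<phi> has_derivative (\<lambda>\<xi>. - sigma \<xi>)) (at 0)"
    have "\<forall>\<^sub>F z in nhds 0. snd z = 0 \<longrightarrow> fst (\<phi> z) = 0"
    proof (rule hprod_invariant_maps_axis[OF hinv \<phi>0 der _ _ _ bc])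
      fix z :: "complex \<times> complex" assume "snd z = 0"
      then show "1 * norm z \<le> norm (snd (- sigma z))"
        by (cases z) (simp add: norm_Pair sigma_def)
    qed simp_all
    then obtain A where A: "conv0 A" "\<forall>\<^sub>F z in nhds 0. fst (\<phi> z) = snd z * A z"
      using conv0_divide_coordinate[of snd, OF _ \<phi>1] by blast
    have "A 0 \<noteq> 0"
      by (rule coordinate_factor_nonzero[of snd, OF _ A(1) der \<phi>0, where c="-1"]) (simp_all add: sigma_def A(2))
    then show ?thesis using that[OF _ A(1) _ A(2)] by simp
  qed
qed

lemma tangent_to_id_axis_factors:
  fixes \<psi> :: "complex \<times> complex \<Rightarrow> complex \<times> complex"
  assumes \<psi>: "conv0_endo \<psi>" and hinv: "\<forall>\<^sub>F z in nhds 0. hprod (\<psi> z) = hprod z"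
    and tangent: "(\<psi> has_derivative id) (at 0)"
  obtains G1 G2 where "conv0 G1" "conv0 G2"
    "\<forall>\<^sub>F z in nhds 0. fst (\<psi> z) = fst z * G1 z" "\<forall>\<^sub>F z in nhds 0. snd (\<psi> z) = snd z * G2 z"
proof -
  note \<psi>0 = conv0_endoD(3)[OF \<psi>]
  have on_fst_axis: "norm z \<le> norm (snd z)" if "fst z = 0" for z :: "complex \<times> complex"
    using that by (cases z) (simp add: norm_Pair)
  have on_snd_axis: "norm z \<le> norm (fst z)" if "snd z = 0" for z :: "complex \<times> complex"
    using that by (cases z) (simp add: norm_Pair)
  have "\<forall>\<^sub>F z in nhds 0. fst z = 0 \<longrightarrow> fst (\<psi> z) = 0"
    by (rule hprod_invariant_maps_axis[OF hinv \<psi>0 tangent, of fst snd fst 1])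
       (simp_all add: hprod_def on_fst_axis)
  then obtain G1 where "conv0 G1" "\<forall>\<^sub>F z in nhds 0. fst (\<psi> z) = fst z * G1 z"
    using conv0_divide_coordinate[of fst, OF _ conv0_endoD(1)[OF \<psi>]] by blast
  moreover have "\<forall>\<^sub>F z in nhds 0. snd z = 0 \<longrightarrow> snd (\<psi> z) = 0"
    by (rule hprod_invariant_maps_axis[OF hinv \<psi>0 tangent, of snd fst snd 1])
       (simp_all add: hprod_def on_snd_axis)
  then obtain G2 where "conv0 G2" "\<forall>\<^sub>F z in nhds 0. snd (\<psi> z) = snd z * G2 z"
    using conv0_divide_coordinate[of snd, OF _ conv0_endoD(2)[OF \<psi>]] by blast
  ultimately show ?thesis using that by blast
qed

lemma axis_multipliersI:
  assumes \<psi>: "conv0_endo \<psi>" and hinv: "\<forall>\<^sub>F z in nhds 0. hprod (\<psi> z) = hprod z"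
    and f: "conv0 f" and f_eq: "\<forall>\<^sub>F z in nhds 0. fst z * f z = fst (\<psi> z) - fst z"
    and G: "conv0 G" and G_eq: "\<forall>\<^sub>F z in nhds 0. snd (\<psi> z) = snd z * G z"
  shows "axis_multipliers \<psi> f (\<lambda>z. G z - 1)"
proof -
  have fst_eq: "\<forall>\<^sub>F z in nhds 0. fst (\<psi> z) = fst z * (1 + f z)"
    using f_eq by eventually_elim (simp add: algebra_simps)
  have hprod_eq: "\<forall>\<^sub>F z in nhds 0. fst z * (snd z * ((1 + f z) * G z)) = fst z * (snd z * 1)"
    using hinv fst_eq G_eq by eventually_elim (simp add: hprod_def mult_ac)
  have fG: "conv0 (\<lambda>z. (1 + f z) * G z)" by (intro conv0_mult conv0_add conv0_const f G)
  have "\<forall>\<^sub>F z in nhds 0. snd z * ((1 + f z) * G z) = snd z * 1"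
    using hprod_eq
    by (rule conv0_cancel_coordinate[of fst, OF _ conv0_mult[OF conv0_snd fG] conv0_mult[OF conv0_snd conv0_const],
          rotated]) simp
  then have "\<forall>\<^sub>F z in nhds 0. (1 + f z) * G z = 1"
    by (rule conv0_cancel_coordinate[of snd, OF _ fG conv0_const, rotated]) simp
  then show ?thesis
    using \<psi> f conv0_diff[OF G conv0_const] fst_eq G_eq
    by unfold_locales simp_all
qed

lemma tangent_to_id_axis_multipliers:
  assumes \<psi>: "conv0_endo \<psi>" and hinv: "\<forall>\<^sub>F z in nhds 0. hprod (\<psi> z) = hprod z"
    and tangent: "(\<psi> has_derivative id) (at 0)"
  shows "\<exists>f. conv0 f \<and> (\<forall>\<^sub>F z in nhds 0. fst z * f z = fst (\<psi> z) - fst z)"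
    and "conv0 f \<Longrightarrow> \<forall>\<^sub>F z in nhds 0. fst z * f z = fst (\<psi> z) - fst z \<Longrightarrow> \<exists>g. axis_multipliers \<psi> f g"
proof -
  obtain G1 G2 where G: "conv0 G1" "conv0 G2"
    "\<forall>\<^sub>F z in nhds 0. fst (\<psi> z) = fst z * G1 z" "\<forall>\<^sub>F z in nhds 0. snd (\<psi> z) = snd z * G2 z"
    using tangent_to_id_axis_factors[OF \<psi> hinv tangent] by blast
  show "\<exists>f. conv0 f \<and> (\<forall>\<^sub>F z in nhds 0. fst z * f z = fst (\<psi> z) - fst z)"
  proof (intro exI conjI)
    show "conv0 (\<lambda>z. G1 z - 1)" by (rule conv0_diff[OF G(1) conv0_const])
    show "\<forall>\<^sub>F z in nhds 0. fst z * (G1 z - 1) = fst (\<psi> z) - fst z"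
      using G(3) by eventually_elim (simp add: algebra_simps)
  qed
  show "\<exists>g. axis_multipliers \<psi> f g"
    if "conv0 f" "\<forall>\<^sub>F z in nhds 0. fst z * f z = fst (\<psi> z) - fst z"
    using axis_multipliersI[OF \<psi> hinv that G(2,4)] by blast
qed

lemma conv_ideal_sigma_image:
  assumes f\<sigma>: "f \<circ> sigma \<in> conv_ideal f"
  shows "(\<lambda>a. a \<circ> sigma) ` conv_ideal f = conv_ideal f"
proof
  note closed = conv_ideal_compose[OF conv0_endo_sigma f\<sigma>]
  show "(\<lambda>a. a \<circ> sigma) ` conv_ideal f \<subseteq> conv_ideal f" using closed by blast
  show "conv_ideal f \<subseteq> (\<lambda>a. a \<circ> sigma) ` conv_ideal f"
  proof
    fix a assume a: "a \<in> conv_ideal f"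
    have "a = (a \<circ> sigma) \<circ> sigma" by (simp add: sigma_def comp_def)
    then show "a \<in> (\<lambda>a. a \<circ> sigma) ` conv_ideal f" using closed[OF a] by (rule image_eqI)
  qed
qed

lemma conv_ideal_invariance:
  fixes \<phi> :: "complex \<times> complex \<Rightarrow> complex \<times> complex"
  assumes \<phi>: "conv0_endo \<phi>" and rev: "\<forall>\<^sub>F z in nhds 0. sigma (\<phi> (sigma (\<phi> z))) = z"
    and f: "conv0 f" and f\<sigma>: "f \<circ> sigma \<in> conv_ideal f" and f\<phi>: "f \<circ> \<phi> \<in> conv_ideal f"
  shows "(\<lambda>a. a \<circ> sigma) ` conv_ideal f = conv_ideal f
          \<and> germ_set_eq ((\<lambda>a. a \<circ> \<phi>) ` conv_ideal f) (conv_ideal f)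
          \<and> fswap ` formal_ideal (taylor f) = formal_ideal (taylor f)
          \<and> (\<lambda>a. fcomp a (taylor (fst \<circ> \<phi>)) (taylor (snd \<circ> \<phi>))) ` formal_ideal (taylor f)
              = formal_ideal (taylor f)"
proof (intro conjI)
  define \<Psi> where "\<Psi> = (\<lambda>z. sigma (\<phi> (sigma z)))"
  have \<Psi>: "conv0_endo \<Psi>" unfolding \<Psi>_def
    by (rule conv0_endo_compose[OF conv0_endo_sigma conv0_endo_compose[OF \<phi> conv0_endo_sigma]])
  have inv: "\<forall>\<^sub>F z in nhds 0. \<Psi> (\<phi> z) = z" using rev by (simp add: \<Psi>_def)
  have "((f \<circ> sigma) \<circ> \<phi>) \<circ> sigma \<in> conv_ideal f"
    by (rule conv_ideal_compose[OF conv0_endo_sigma f\<sigma> conv_ideal_compose[OF \<phi> f\<phi> f\<sigma>]])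
  then have f\<Psi>: "f \<circ> \<Psi> \<in> conv_ideal f" by (simp add: \<Psi>_def comp_def)
  show "(\<lambda>a. a \<circ> sigma) ` conv_ideal f = conv_ideal f" by (rule conv_ideal_sigma_image[OF f\<sigma>])
  show "germ_set_eq ((\<lambda>a. a \<circ> \<phi>) ` conv_ideal f) (conv_ideal f)"
    by (rule germ_set_eq_image[OF conv_ideal_compose[OF \<phi> f\<phi>] conv_ideal_compose[OF \<Psi> f\<Psi>] inv])
  have "fswap (taylor f) \<in> formal_ideal (taylor f)"
    using taylor_mem_formal_ideal[OF f f\<sigma>] taylor_swap[OF f] by (simp add: comp_def sigma_def)
  then show "fswap ` formal_ideal (taylor f) = formal_ideal (taylor f)"
    using formal_ideal_image_eq[OF fswap_fmult fswap_fmult _ _ fswap_fswap] by blast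
  have compose_mem: "fps2_compose (taylor f) \<Phi> \<in> formal_ideal (taylor f)"
    if "conv0_endo \<Phi>" "f \<circ> \<Phi> \<in> conv_ideal f" for \<Phi>
    using taylor_mem_formal_ideal[OF f that(2)] taylor_compose[OF f that(1)] by (simp add: comp_def)
  have fcomp_eq: "(\<lambda>a. fcomp a (taylor (fst \<circ> \<phi>)) (taylor (snd \<circ> \<phi>))) = (\<lambda>a. fps2_compose a \<phi>)"
    by (simp add: fps2_compose_def comp_def)
  show "(\<lambda>a. fcomp a (taylor (fst \<circ> \<phi>)) (taylor (snd \<circ> \<phi>))) ` formal_ideal (taylor f)
      = formal_ideal (taylor f)"
    unfolding fcomp_eq
    by (rule formal_ideal_image_eq[OF fps2_compose_fmult[OF \<phi>] fps2_compose_fmult[OF \<Psi>]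
          compose_mem[OF \<phi> f\<phi>] compose_mem[OF \<Psi> f\<Psi>] fps2_compose_inverse[OF \<phi> \<Psi> inv]])
qed

theorem mainTheorem15:
  fixes \<phi> :: "complex \<times> complex \<Rightarrow> complex \<times> complex" and p :: nat
  assumes hol: "conv0 (fst \<circ> \<phi>)" "conv0 (snd \<circ> \<phi>)"
    and fix0: "\<phi> 0 = 0"
    and rev: "\<forall>\<^sub>F \<xi> in nhds 0. sigma (\<phi> (sigma (\<phi> \<xi>))) = \<xi>"
             "\<forall>\<^sub>F \<xi> in nhds 0. \<phi> (sigma (\<phi> (sigma \<xi>))) = \<xi>"
    and hinv: "\<forall>\<^sub>F \<xi> in nhds 0. hprod (\<phi> \<xi>) = hprod \<xi>"
    and lin: "(\<exists>l::complex. l \<noteq> 0 \<and>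
                 (\<phi> has_derivative (\<lambda>\<xi>. (l * fst \<xi>, snd \<xi> / l))) (at 0))
              \<or> (\<phi> has_derivative (\<lambda>\<xi>. - sigma \<xi>)) (at 0)"
    and p: "p \<ge> 1"
    and tangent: "((\<phi> ^^ p) has_derivative id) (at 0)"
    and nontriv: "\<not> (\<forall>\<^sub>F \<xi> in nhds 0. (\<phi> ^^ p) \<xi> = \<xi>)"
  shows "(\<exists>f. conv0 f \<and>
            (\<forall>\<^sub>F \<xi> in nhds 0. fst \<xi> * f \<xi> = fst ((\<phi> ^^ p) \<xi>) - fst \<xi>))
       \<and> (\<forall>f. conv0 f \<and>
            (\<forall>\<^sub>F \<xi> in nhds 0. fst \<xi> * f \<xi> = fst ((\<phi> ^^ p) \<xi>) - fst \<xi>) \<longrightarrow>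
            (\<lambda>a. a \<circ> sigma) ` conv_ideal f = conv_ideal f
          \<and> germ_set_eq ((\<lambda>a. a \<circ> \<phi>) ` conv_ideal f) (conv_ideal f)
          \<and> fswap ` formal_ideal (taylor f) = formal_ideal (taylor f)
          \<and> (\<lambda>a. fcomp a (taylor (fst \<circ> \<phi>)) (taylor (snd \<circ> \<phi>))) ` formal_ideal (taylor f)
              = formal_ideal (taylor f))"
proof -
  have \<phi>: "conv0_endo \<phi>" using hol fix0 by (simp add: conv0_endo_def comp_def)
  define \<psi> where "\<psi> = \<phi> ^^ p"
  have \<psi>: "conv0_endo \<psi>" unfolding \<psi>_def by (rule conv0_endo_funpow[OF \<phi>])
  have h\<psi>: "\<forall>\<^sub>F z in nhds 0. hprod (\<psi> z) = hprod z"
    unfolding \<psi>_def by (rule eventually_funpow_invariant[OF \<phi> hinv])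
  have comm: "\<psi> (\<phi> z) = \<phi> (\<psi> z)" for z by (simp add: \<psi>_def funpow_swap1)
  obtain x A where \<phi>_factor: "x \<in> {fst, snd}" "conv0 A" "A 0 \<noteq> 0" "\<forall>\<^sub>F z in nhds 0. fst (\<phi> z) = x z * A z"
    using hprod_invariant_fst_factor[OF \<phi> hinv lin] by blast
  note multipliers = tangent_to_id_axis_multipliers[OF \<psi> h\<psi> tangent[folded \<psi>_def]]
  have members: "f \<circ> sigma \<in> conv_ideal f \<and> f \<circ> \<phi> \<in> conv_ideal f"
    if f: "conv0 f" and f_eq: "\<forall>\<^sub>F z in nhds 0. fst z * f z = fst (\<psi> z) - fst z" for f
  proof -
    obtain g where "axis_multipliers \<psi> f g" using multipliers(2)[OF f f_eq] by blast
    then interpret axis_multipliers \<psi> f g .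
    show ?thesis
      using swap_mem_conv_ideal[OF reversible_funpow[OF \<phi> rev(1), of p, folded \<psi>_def]]
        commuting_mem_conv_ideal[OF \<phi> comm \<phi>_factor] by blast
  qed
  show ?thesis
    unfolding \<psi>_def[symmetric]
    by (intro conjI[OF multipliers(1)] allI impI, elim conjE, rule conv_ideal_invariance[OF \<phi> rev(1)])
       (simp_all add: members)
qed

end
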